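(* Let $d_0=65$, $\gamma_1=18$, $\gamma_2=13$, let $n\ge d_0+4$, and let $\mathcal{H}$ be a $[3]$-graph on $n$ vertices such that every pair of non-adjacent vertices $u,v$ satisfies $d_{\partial\mathcal{H}}(u)+d_{\partial\mathcal{H}}(v)\ge n+d_0$. Let $\mathcal{C}=v_1,e_1,\dots,v_\ell,e_\ell,v_1$ be a maximal Berge cycle in $\mathcal{H}$ with $\ell=|V(\mathcal{C})|\in\{n-1,n-2,n-3\}$. Then for every $u\in V(\mathcal{H})\setminus V(\mathcal{C})$ and every set $U_u$ usable for $u$ with $|U_u|\ge d_{\mathcal{C}}(u)/6$: (a) $|U_u\cap S|\le 3$; (b) $|U_u\cap B|\ge |U_u|-3$; (c) $|R(v_i,v_j)|\ge d_{\mathcal{C}}(v_i)+d_{\mathcal{C}}(v_j)-|V(\mathcal{C})|-4$ for all distinct $v_i,v_j\in U_u$; (d) $u\in S'$; (e) $|U_u\cap B'|\le 3$.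
   Context: A $[3]$-graph is a hypergraph in which every edge has at most $3$ vertices. For vertices $x,y$, $E(x,y)$ is the set of edges containing both; $x,y$ are adjacent if $E(x,y)\neq\emptyset$; $N(x)$ is the set of vertices adjacent to $x$ and $d_{\partial\mathcal{H}}(x)=|N(x)|$. A Berge cycle $\mathcal{C}=v_1,e_1,\dots,v_\ell,e_\ell,v_1$ consists of distinct edges $e_1,\dots,e_\ell$ and distinct vertices $v_1,\dots,v_\ell$ with $\{v_i,v_{i+1}\}\subseteq e_i$ (indices modulo $\ell$); $V(\mathcal{C})=\{v_1,\dots,v_\ell\}$. It is maximal if there is no Berge cycle $\mathcal{C}'$ with $V(\mathcal{C})\subsetneq V(\mathcal{C}')$. $N_{\mathcal{C}}(x)=N(x)\cap V(\mathcal{C})$, $d_{\mathcal{C}}(x)=|N_{\mathcal{C}}(x)|$. A set $U_u\subseteq V(\mathcal{C})$ is usable for $u\notin V(\mathcal{C})$ if: (1) for every $v_i\in U_u$, $E(u,v_{i-1})\setminus\{e_{i-2}\}\neq\emptyset$; (2) for any distinct $v_i,v_j\in U_u$, $v_i$ and $v_j$ are not consecutive on $\mathcal{C}$; (3) for any distinct $v_i,v_j\in U_u$ there exist edges $e(u,v_{i-1})\in E(u,v_{i-1})\setminus\{e_{i-2}\}$ and $e(u,v_{j-1})\in E(u,v_{j-1})\setminus\{e_{j-2}\}$ with $e(u,v_{i-1})\neq e(u,v_{j-1})$. Vertex classes (all vertices of $\mathcal{H}$): $S'=\{v: d_{\mathcal{C}}(v)<n/4+\gamma_1\}$, $S=\{v: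 d_{\mathcal{C}}(v)<(n+d_0)/2-3\}$, $B=\{v: d_{\mathcal{C}}(v)\ge (n+d_0)/2-3\}$, $B'=\{v: d_{\mathcal{C}}(v)\ge 3n/4+\gamma_2\}$. For distinct vertices $v_i,v_j,v_k$ of $\mathcal{C}$, write $v_i\to v_k\to v_j$ if $v_k$ lies on the segment of $\mathcal{C}$ going from $v_i$ to $v_j$ in the direction of increasing indices. An edge $e$ is an $(i,j;k)$-bridge if either $v_i\to v_k\to v_j$ and ($e=e_{k+1}=\{v_i,v_{k+1},v_{k+2}\}$ or $e=e_{k-1}=\{v_j,v_k,v_{k-1}\}$), or $v_j\to v_k\to v_i$ and ($e=e_{k-1}=\{v_i,v_k,v_{k-1}\}$ or $e=e_{k+1}=\{v_j,v_{k+1},v_{k+2}\}$). $R(v_i,v_j)$ is the set of all edges that are $(i,j;k)$-bridges for some index $k\notin\{i,j\}$. *)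

theory Defs
  imports Complex_Main
begin

definition three_graph :: "'a set \<Rightarrow> 'a set set \<Rightarrow> bool" where
  "three_graph V E \<longleftrightarrow> finite V \<and> (\<forall>e\<in>E. e \<subseteq> V \<and> card e \<le> 3)"

definition edges_with :: "'a set set \<Rightarrow> 'a \<Rightarrow> 'a \<Rightarrow> 'a set set" where
  "edges_with E x y = {e \<in> E. x \<in> e \<and> y \<in> e}"

definition adjacent :: "'a set set \<Rightarrow> 'a \<Rightarrow> 'a \<Rightarrow> bool" where
  "adjacent E x y \<longleftrightarrow> edges_with E x y \<noteq> {}"

definition nbhd :: "'a set \<Rightarrow> 'a set set \<Rightarrow> 'a \<Rightarrow> 'a set" where
  "nbhd V E x = {y \<in> V. y \<noteq> x \<and> adjacent E x y}"

definition deg :: "'a set \<Rightarrow> 'a set set \<Rightarrow> 'a \<Rightarrow> nat" where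
  "deg V E x = card (nbhd V E x)"

text \<open>A Berge cycle v_0,e_0,...,v_(l-1),e_(l-1),v_0 given by a list of vertices and a list
  of edges (0-based indexing; the paper uses 1-based), with {v_i, v_(i+1)} \<subseteq> e_i mod l.\<close>
definition berge_cycle :: "'a set set \<Rightarrow> 'a list \<Rightarrow> 'a set list \<Rightarrow> bool" where
  "berge_cycle E vs es \<longleftrightarrow> length vs = length es \<and> length vs \<ge> 2 \<and>
     distinct vs \<and> distinct es \<and> set es \<subseteq> E \<and>
     (\<forall>i<length vs. {vs ! i, vs ! ((i + 1) mod length vs)} \<subseteq> es ! i)"

definition maximal_berge_cycle :: "'a set set \<Rightarrow> 'a list \<Rightarrow> 'a set list \<Rightarrow> bool" where
  "maximal_berge_cycle E vs es \<longleftrightarrow> berge_cycle E vs es \<and>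
     \<not> (\<exists>vs' es'. berge_cycle E vs' es' \<and> set vs \<subset> set vs')"

definition cv :: "'a list \<Rightarrow> int \<Rightarrow> 'a" where
  "cv vs i = vs ! nat (i mod int (length vs))"

definition ce :: "'a set list \<Rightarrow> int \<Rightarrow> 'a set" where
  "ce es i = es ! nat (i mod int (length es))"

definition degC :: "'a set \<Rightarrow> 'a set set \<Rightarrow> 'a list \<Rightarrow> 'a \<Rightarrow> nat" where
  "degC V E vs x = card (nbhd V E x \<inter> set vs)"

definition usable :: "'a set set \<Rightarrow> 'a list \<Rightarrow> 'a set list \<Rightarrow> 'a \<Rightarrow> 'a set \<Rightarrow> bool" where
  "usable E vs es u U \<longleftrightarrow> U \<subseteq> set vs \<and>
    (\<forall>i\<in>{0..<int (length vs)}. cv vs i \<in> U \<longrightarrow>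
        edges_with E u (cv vs (i - 1)) - {ce es (i - 2)} \<noteq> {}) \<and>
    (\<forall>i\<in>{0..<int (length vs)}. \<forall>j\<in>{0..<int (length vs)}.
        cv vs i \<in> U \<and> cv vs j \<in> U \<and> i \<noteq> j \<longrightarrow>
        j \<noteq> (i + 1) mod int (length vs) \<and> i \<noteq> (j + 1) mod int (length vs)) \<and>
    (\<forall>i\<in>{0..<int (length vs)}. \<forall>j\<in>{0..<int (length vs)}.
        cv vs i \<in> U \<and> cv vs j \<in> U \<and> i \<noteq> j \<longrightarrow>
        (\<exists>f g. f \<in> edges_with E u (cv vs (i - 1)) - {ce es (i - 2)} \<and>
               g \<in> edges_with E u (cv vs (j - 1)) - {ce es (j - 2)} \<and> f \<noteq> g))"

definition classS' :: "'a set \<Rightarrow> 'a set set \<Rightarrow> 'a list \<Rightarrow> nat \<Rightarrow> real \<Rightarrow> 'a set" where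
  "classS' V E vs n \<gamma>1 = {v \<in> V. real (degC V E vs v) < real n / 4 + \<gamma>1}"

definition classS :: "'a set \<Rightarrow> 'a set set \<Rightarrow> 'a list \<Rightarrow> nat \<Rightarrow> real \<Rightarrow> 'a set" where
  "classS V E vs n d0 = {v \<in> V. real (degC V E vs v) < (real n + d0) / 2 - 3}"

definition classB :: "'a set \<Rightarrow> 'a set set \<Rightarrow> 'a list \<Rightarrow> nat \<Rightarrow> real \<Rightarrow> 'a set" where
  "classB V E vs n d0 = {v \<in> V. real (degC V E vs v) \<ge> (real n + d0) / 2 - 3}"

definition classB' :: "'a set \<Rightarrow> 'a set set \<Rightarrow> 'a list \<Rightarrow> nat \<Rightarrow> real \<Rightarrow> 'a set" where
  "classB' V E vs n \<gamma>2 = {v \<in> V. real (degC V E vs v) \<ge> 3 * real n / 4 + \<gamma>2}"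

text \<open>v_i \<rightarrow> v_k \<rightarrow> v_j: distinct indices (mod l) with v_k on the segment from v_i to v_j
  in the direction of increasing indices.\<close>
definition on_seg :: "int \<Rightarrow> int \<Rightarrow> int \<Rightarrow> int \<Rightarrow> bool" where
  "on_seg l i k j \<longleftrightarrow> i mod l \<noteq> k mod l \<and> k mod l \<noteq> j mod l \<and> i mod l \<noteq> j mod l \<and>
     (k - i) mod l < (j - i) mod l"

definition bridge :: "'a list \<Rightarrow> 'a set list \<Rightarrow> int \<Rightarrow> int \<Rightarrow> int \<Rightarrow> 'a set \<Rightarrow> bool" where
  "bridge vs es i j k e \<longleftrightarrow>
    (on_seg (int (length vs)) i k j \<and>
      ((e = ce es (k + 1) \<and> ce es (k + 1) = {cv vs i, cv vs (k + 1), cv vs (k + 2)}) \<or>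
       (e = ce es (k - 1) \<and> ce es (k - 1) = {cv vs j, cv vs k, cv vs (k - 1)}))) \<or>
    (on_seg (int (length vs)) j k i \<and>
      ((e = ce es (k - 1) \<and> ce es (k - 1) = {cv vs i, cv vs k, cv vs (k - 1)}) \<or>
       (e = ce es (k + 1) \<and> ce es (k + 1) = {cv vs j, cv vs (k + 1), cv vs (k + 2)})))"

definition bridges :: "'a list \<Rightarrow> 'a set list \<Rightarrow> int \<Rightarrow> int \<Rightarrow> 'a set set" where
  "bridges vs es i j = {e. \<exists>k\<in>{0..<int (length vs)}. k \<noteq> i \<and> k \<noteq> j \<and> bridge vs es i j k e}"

end

theory Submission
  imports Defs
begin

(* Maximality forbids every way of absorbing u into the cycle: inserting
   it between two consecutive cycle vertices, or rerouting the cycle through u's two usable edges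
   and two crossing chords.

   If two vertices of U are adjacent, one of them lies in the cycle edge leaving the other.  A
   cycle edge contains at most one vertex besides its two ends, so at most three vertices of U
   are pairwise adjacent; by the Ore-type condition the vertices of U in S are pairwise adjacent,
   whence (a) and (b).

   For v_a, v_b in U, every cycle position c at which v_a and v_b see v_{a+c} and v_{a+c+1}
   crosswise forces a bridge at c; counting such positions by inclusion-exclusion gives (c).  The
   third vertex of a bridge is one of the pair it serves, so every cycle edge is a bridge for at
   most 2(|K| - 1) ordered pairs from K \<subseteq> U.  Double counting against (c) bounds U \<inter> B and
   U \<inter> B', which yields (d) and (e). *)

lemma zdvd_eq_0_if_less:
  fixes L z :: int
  assumes "L dvd z" "- L < z" "z < L"
  shows "z = 0"
proof (rule ccontr)
  assume "z \<noteq> 0"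
  then have "\<bar>L\<bar> \<le> \<bar>z\<bar>" using assms(1) by (rule dvd_imp_le_int)
  then show False using assms(2,3) by linarith
qed

lemma zdvd_diff_add_mod: "(L :: int) dvd (j - (i + (j - i) mod L))"
  by (metis diff_diff_eq dvd_minus_mod)

lemma mod_eq_if_dvd_diff:
  fixes L x y :: int
  shows "0 \<le> y \<Longrightarrow> y < L \<Longrightarrow> L dvd (x - y) \<Longrightarrow> x mod L = y"
  by (metis mod_eq_dvd_iff mod_pos_pos_trivial)

lemma sum_card_swap:
  assumes "finite P" "finite S" "\<And>p. p \<in> P \<Longrightarrow> R p \<subseteq> S"
  shows "(\<Sum>p\<in>P. card (R p)) = (\<Sum>e\<in>S. card {p \<in> P. e \<in> R p})"
proof -
  have "(\<Sum>p\<in>P. card (R p)) = (\<Sum>p\<in>P. \<Sum>e\<in>S. if e \<in> R p then 1 else 0)"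
    using assms(2,3) by (intro sum.cong refl) (simp add: sum.If_cases Int_absorb1)
  also have "\<dots> = (\<Sum>e\<in>S. \<Sum>p\<in>P. if e \<in> R p then 1 else 0)" by (rule sum.swap)
  also have "\<dots> = (\<Sum>e\<in>S. card {p \<in> P. e \<in> R p})"
    using assms(1) by (simp add: sum.If_cases Int_def conj_commute)
  finally show ?thesis .
qed

lemma card_off_diag: "finite K \<Longrightarrow> card (K \<times> K - Id) = (card K - 1) * card K"
proof -
  assume fin: "finite K"
  have "K \<times> K \<inter> Id = (\<lambda>x. (x, x)) ` K" by auto
  moreover have "card ((\<lambda>x. (x, x)) ` K) = card K" by (rule card_image) (auto simp: inj_on_def)
  ultimately show ?thesis
    using fin by (simp add: card_Diff_subset_Int card_cartesian_product diff_mult_distrib)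
qed

lemma card_le_3_no_four_distinct:
  assumes "finite e" "card e \<le> 3" "a \<in> e" "b \<in> e" "c \<in> e" "d \<in> e"
    "a \<noteq> b" "a \<noteq> c" "a \<noteq> d" "b \<noteq> c" "b \<noteq> d" "c \<noteq> d"
  shows False
proof -
  have "card {a, b, c, d} \<le> card e" using assms(1,3-6) by (intro card_mono) auto
  then show False using assms(2,7-) by simp
qed

lemma card_le_3_eq_triple:
  assumes "finite e" "card e \<le> 3" "a \<in> e" "b \<in> e" "c \<in> e" "a \<noteq> b" "a \<noteq> c" "b \<noteq> c"
  shows "e = {a, b, c}"
proof -
  have sub: "{a, b, c} \<subseteq> e" using assms by auto
  have "card {a, b, c} = 3" using assms by auto
  then show ?thesis
    using card_subset_eq[OF assms(1) sub] assms(2) card_mono[OF assms(1) sub] by simp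
qed

lemma card_le_card_add_if_Diff_subset_image:
  assumes "finite A" "finite Z" "N - Z \<subseteq> f ` A"
  shows "card N \<le> card A + card Z"
proof -
  have fin: "finite (N - Z)" using assms(1,3) finite_surj by blast
  have "card N \<le> card ((N - Z) \<union> Z)" using fin assms(2) by (intro card_mono) auto
  also have "\<dots> \<le> card (N - Z) + card Z" by (rule card_Un_le)
  also have "card (N - Z) \<le> card A" using surj_card_le[OF assms(1,3)] .
  finally show ?thesis by simp
qed

lemma card_Int_Diff_ge:
  assumes "finite D" "A \<subseteq> D" "B \<subseteq> D" "P \<subseteq> D" "Q \<subseteq> D" "card P \<le> 1" "card Q \<le> 1"
  shows "card A + card B \<le> card (A \<inter> B - P - Q) + card D + 2"
proof -
  have fin: "finite A" "finite B" "finite P" "finite Q" using assms(1-5) finite_subset by blast+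
  have "card A + card B = card (A \<union> B) + card (A \<inter> B)" using fin(1,2) by (rule card_Un_Int)
  moreover have "card (A \<union> B) \<le> card D" using assms(1-3) by (intro card_mono) auto
  moreover have "card (A \<inter> B) \<le> card (A \<inter> B - P - Q) + card P + card Q"
  proof -
    have "card (A \<inter> B) \<le> card ((A \<inter> B - P - Q) \<union> P \<union> Q)" using fin by (intro card_mono) auto
    also have "\<dots> \<le> card (A \<inter> B - P - Q) + card P + card Q"
      by (metis card_Un_le add_le_mono le_refl order_trans)
    finally show ?thesis .
  qed
  ultimately show ?thesis using assms(6,7) by linarith
qed

lemma nbhd_imp_edge: "y \<in> nbhd V E x \<Longrightarrow> \<exists>h\<in>E. x \<in> h \<and> y \<in> h"
  unfolding nbhd_def adjacent_def edges_with_def by blast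

lemma berge_cycle_of_fun:
  fixes W :: "nat \<Rightarrow> 'a" and F :: "nat \<Rightarrow> 'a set" and N :: nat
  assumes "N \<ge> 2" "inj_on W {..<N}" "inj_on F {..<N}" "\<And>t. t < N \<Longrightarrow> F t \<in> E"
    "\<And>t. t < N \<Longrightarrow> W t \<in> F t" "\<And>t. t < N \<Longrightarrow> W ((t + 1) mod N) \<in> F t"
  shows "berge_cycle E (map W [0..<N]) (map F [0..<N])"
  unfolding berge_cycle_def
proof (intro conjI allI impI)
  show "distinct (map W [0..<N])" using assms(2) by (simp add: distinct_map lessThan_atLeast0)
  show "distinct (map F [0..<N])" using assms(3) by (simp add: distinct_map lessThan_atLeast0)
  show "set (map F [0..<N]) \<subseteq> E" using assms(4) by auto
  fix i assume i: "i < length (map W [0..<N])"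
  have "(i + 1) mod N < N" using assms(1) by simp
  then show "{map W [0..<N] ! i, map W [0..<N] ! ((i + 1) mod length (map W [0..<N]))}
      \<subseteq> map F [0..<N] ! i"
    using i assms(5,6) by simp
qed (use assms in auto)

(* Relative to a base position, the cycle rerouted through u and the chords v_0 v_c, v_d v_{c+1}
   reads u, v_{L-1}, ..., v_{c+1}, v_d, ..., v_c, v_0, ..., v_{d-1}; rotation_pos gives the position
   of its T-th vertex (1 \<le> T \<le> L), and rotation_step holds when the T-th step uses a cycle edge. *)
definition rotation_pos :: "int \<Rightarrow> int \<Rightarrow> int \<Rightarrow> int \<Rightarrow> int" where
  "rotation_pos L d c T =
    (if T \<le> L - 1 - c then L - T else if T \<le> L - d then T + c + d - L else T + d - L - 1)"

definition rotation_step :: "int \<Rightarrow> int \<Rightarrow> int \<Rightarrow> int \<Rightarrow> bool" where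
  "rotation_step L d c T \<longleftrightarrow>
    (1 \<le> T \<and> T \<le> L - 2 - c) \<or> (L - c \<le> T \<and> T \<le> L - d - 1) \<or> (L - d + 1 \<le> T \<and> T \<le> L - 1)"

abbreviation rotation_edge_pos :: "int \<Rightarrow> int \<Rightarrow> int \<Rightarrow> int \<Rightarrow> int" where
  "rotation_edge_pos L d c T \<equiv> min (rotation_pos L d c T) (rotation_pos L d c (T + 1))"

context
  fixes L d c :: int
  assumes dc: "2 \<le> d" "d \<le> c" "c \<le> L - 2"
begin

lemma rotation_pos_range: "1 \<le> T \<Longrightarrow> T \<le> L \<Longrightarrow> 0 \<le> rotation_pos L d c T \<and> rotation_pos L d c T < L"
  using dc unfolding rotation_pos_def by auto

lemma rotation_pos_inj:
  "1 \<le> T \<Longrightarrow> T \<le> L \<Longrightarrow> 1 \<le> T' \<Longrightarrow> T' \<le> L \<Longrightarrow> rotation_pos L d c T = rotation_pos L d c T' \<Longrightarrow> T = T'"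
  using dc unfolding rotation_pos_def by (auto split: if_splits)

lemma rotation_pos_special:
  "rotation_pos L d c 1 = L - 1" "rotation_pos L d c (L - 1 - c) = c + 1"
  "rotation_pos L d c (L - c) = d" "rotation_pos L d c (L - d) = c"
  "rotation_pos L d c (L - d + 1) = 0" "rotation_pos L d c L = d - 1"
  using dc unfolding rotation_pos_def by auto

lemma rotation_step_pos:
  "rotation_step L d c T \<Longrightarrow>
    rotation_pos L d c T \<in> {rotation_edge_pos L d c T, rotation_edge_pos L d c T + 1} \<and>
    rotation_pos L d c (T + 1) \<in> {rotation_edge_pos L d c T, rotation_edge_pos L d c T + 1}"
  using dc unfolding rotation_pos_def rotation_step_def by auto

lemma rotation_edge_pos_range:
  "rotation_step L d c T \<Longrightarrow>
    (c + 1 \<le> rotation_edge_pos L d c T \<and> rotation_edge_pos L d c T \<le> L - 2) \<or>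
    (d \<le> rotation_edge_pos L d c T \<and> rotation_edge_pos L d c T \<le> c - 1) \<or>
    (0 \<le> rotation_edge_pos L d c T \<and> rotation_edge_pos L d c T \<le> d - 2)"
  using dc unfolding rotation_pos_def rotation_step_def by auto

lemma rotation_edge_pos_inj:
  "rotation_step L d c T \<Longrightarrow> rotation_step L d c T' \<Longrightarrow>
    rotation_edge_pos L d c T = rotation_edge_pos L d c T' \<Longrightarrow> T = T'"
  using dc unfolding rotation_pos_def rotation_step_def by (auto split: if_splits)

lemma not_rotation_step:
  "1 \<le> T \<Longrightarrow> T \<le> L \<Longrightarrow> \<not> rotation_step L d c T \<Longrightarrow> T = L - 1 - c \<or> T = L - d \<or> T = L"
  using dc unfolding rotation_step_def by auto

lemma rotation_step_not_special:
  "rotation_step L d c T \<Longrightarrow> 1 \<le> T \<and> T \<le> L - 1 \<and> T \<noteq> L - 1 - c \<and> T \<noteq> L - d"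
  using dc unfolding rotation_step_def by auto

end

(* With v_j = v_{i+d}, the cycle edge at position c (c \<noteq> d - 1, d) is crossed by chords from v_i to
   v_{i + partner_i d c} and from v_j to v_{i + partner_j d c}. *)
definition partner_i :: "int \<Rightarrow> int \<Rightarrow> int" where
  "partner_i d c = (if c \<le> d - 2 then c + 1 else c)"

definition partner_j :: "int \<Rightarrow> int \<Rightarrow> int" where
  "partner_j d c = (if c \<le> d - 2 then c else c + 1)"

lemma partner_ranges:
  assumes "c \<in> {1..d - 2} \<union> {d + 1..L - 2}" "2 \<le> d" "d \<le> L - 2"
  shows "2 \<le> partner_i d c \<and> partner_i d c \<le> L - 2 \<and> partner_i d c \<noteq> d"
    "1 \<le> partner_j d c \<and> partner_j d c \<le> L - 1 \<and> partner_j d c \<notin> {d, d + 1}"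
  using assms unfolding partner_i_def partner_j_def by auto

lemma inj_on_partners:
  "inj_on (partner_i d) ({1..d - 2} \<union> {d + 1..L - 2})"
  "inj_on (partner_j d) ({1..d - 2} \<union> {d + 1..L - 2})"
  unfolding partner_i_def partner_j_def by (auto intro!: inj_onI split: if_splits)

lemma card_le_card_partner_i:
  assumes N: "N \<subseteq> {1..<L}" and d: "2 \<le> d" "d \<le> L - 2"
  shows "card N \<le> card {c \<in> {1..d - 2} \<union> {d + 1..L - 2}. partner_i d c \<in> N} + 3"
proof -
  have "card N \<le> card {c \<in> {1..d - 2} \<union> {d + 1..L - 2}. partner_i d c \<in> N} + card {1, d, L - 1}"
  proof (rule card_le_card_add_if_Diff_subset_image)
    show "N - {1, d, L - 1} \<subseteq>
        partner_i d ` {c \<in> {1..d - 2} \<union> {d + 1..L - 2}. partner_i d c \<in> N}"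
    proof
      fix m assume m: "m \<in> N - {1, d, L - 1}"
      define c where "c = (if m \<le> d - 1 then m - 1 else m)"
      have "partner_i d c = m" "c \<in> {1..d - 2} \<union> {d + 1..L - 2}"
        using m N d unfolding c_def partner_i_def by auto
      then show "m \<in> partner_i d ` {c \<in> {1..d - 2} \<union> {d + 1..L - 2}. partner_i d c \<in> N}"
        using m by (metis (mono_tags, lifting) DiffD1 image_eqI mem_Collect_eq)
    qed
  qed auto
  moreover have "card {1, d, L - 1} \<le> 3" by (simp add: card_insert_if)
  ultimately show ?thesis by linarith
qed

lemma card_le_card_partner_j:
  assumes N: "N \<subseteq> {0..<L} - {d}" and d: "2 \<le> d" "d \<le> L - 2"
  shows "card N \<le> card {c \<in> {1..d - 2} \<union> {d + 1..L - 2}. partner_j d c \<in> N} + 3"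
proof -
  have "card N \<le> card {c \<in> {1..d - 2} \<union> {d + 1..L - 2}. partner_j d c \<in> N} + card {0, d - 1, d + 1}"
  proof (rule card_le_card_add_if_Diff_subset_image)
    show "N - {0, d - 1, d + 1} \<subseteq>
        partner_j d ` {c \<in> {1..d - 2} \<union> {d + 1..L - 2}. partner_j d c \<in> N}"
    proof
      fix m assume m: "m \<in> N - {0, d - 1, d + 1}"
      define c where "c = (if m \<le> d - 2 then m else m - 1)"
      have "partner_j d c = m" "c \<in> {1..d - 2} \<union> {d + 1..L - 2}"
        using m N d unfolding c_def partner_j_def by auto
      then show "m \<in> partner_j d ` {c \<in> {1..d - 2} \<union> {d + 1..L - 2}. partner_j d c \<in> N}"
        using m by (metis (mono_tags, lifting) DiffD1 image_eqI mem_Collect_eq)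
    qed
  qed auto
  moreover have "card {0, d - 1, d + 1} \<le> 3" by (simp add: card_insert_if)
  ultimately show ?thesis by linarith
qed

section \<open>Positions on a maximal Berge cycle\<close>

locale max_cycle =
  fixes V :: "'a set" and E :: "'a set set" and vs :: "'a list" and es :: "'a set list"
  assumes three_graph: "three_graph V E" and maximal: "maximal_berge_cycle E vs es"
begin

abbreviation "L \<equiv> int (length vs)"

lemma berge_cycle_vs_es: "berge_cycle E vs es"
  using maximal unfolding maximal_berge_cycle_def by blast

lemma length_es: "length es = length vs"
  and length_vs_ge_2: "length vs \<ge> 2"
  and distinct_vs: "distinct vs"
  and distinct_es: "distinct es"
  and set_es_subset: "set es \<subseteq> E"
  using berge_cycle_vs_es unfolding berge_cycle_def by simp_all

lemma vs_not_Nil [simp]: "vs \<noteq> []"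
  using length_vs_ge_2 by auto

lemma L_pos: "L > 0"
  using length_vs_ge_2 by linarith

lemma edgeD: "e \<in> E \<Longrightarrow> finite e \<and> card e \<le> 3 \<and> e \<subseteq> V"
  using three_graph unfolding three_graph_def by (meson finite_subset)

lemma finite_V: "finite V"
  using three_graph unfolding three_graph_def by simp

lemma nat_mod_L_less: "nat (x mod L) < length vs"
  using L_pos by (simp add: nat_less_iff)

lemma cv_in_set: "cv vs x \<in> set vs"
  unfolding cv_def using nat_mod_L_less by simp

lemma ce_in_set: "ce es x \<in> set es"
  unfolding ce_def using nat_mod_L_less length_es by (metis nth_mem)

lemma ce_in_E: "ce es x \<in> E"
  using ce_in_set set_es_subset by blast

lemma cv_eq_iff: "cv vs x = cv vs y \<longleftrightarrow> L dvd (x - y)"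
proof -
  have "cv vs x = cv vs y \<longleftrightarrow> nat (x mod L) = nat (y mod L)"
    unfolding cv_def using nat_mod_L_less distinct_vs by (simp add: nth_eq_iff_index_eq)
  also have "\<dots> \<longleftrightarrow> L dvd (x - y)" using L_pos by (simp add: eq_nat_nat_iff mod_eq_dvd_iff)
  finally show ?thesis .
qed

lemma ce_eq_iff: "ce es x = ce es y \<longleftrightarrow> L dvd (x - y)"
proof -
  have "ce es x = ce es y \<longleftrightarrow> nat (x mod L) = nat (y mod L)"
    unfolding ce_def using nat_mod_L_less distinct_es length_es by (simp add: nth_eq_iff_index_eq)
  also have "\<dots> \<longleftrightarrow> L dvd (x - y)" using L_pos by (simp add: eq_nat_nat_iff mod_eq_dvd_iff)
  finally show ?thesis .
qed

lemma cv_in_ce: "cv vs x \<in> ce es x"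
  and cv_succ_in_ce: "cv vs (x + 1) \<in> ce es x"
proof -
  have sub: "{vs ! nat (x mod L), vs ! ((nat (x mod L) + 1) mod length vs)} \<subseteq> es ! nat (x mod L)"
    using berge_cycle_vs_es nat_mod_L_less unfolding berge_cycle_def by blast
  then show "cv vs x \<in> ce es x" unfolding cv_def ce_def length_es by simp
  have "int ((nat (x mod L) + 1) mod length vs) = (x mod L + 1) mod L"
    using L_pos by (simp add: zmod_int add.commute)
  also have "\<dots> = (x + 1) mod L" by (simp add: mod_add_left_eq)
  finally have "(nat (x mod L) + 1) mod length vs = nat ((x + 1) mod L)" by simp
  then show "cv vs (x + 1) \<in> ce es x" using sub unfolding cv_def ce_def length_es by simp
qed

lemma cv_ne_succ: "cv vs x \<noteq> cv vs (x + 1)"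
  unfolding cv_eq_iff using length_vs_ge_2 by simp

lemma set_vs_subset_V: "set vs \<subseteq> V"
proof
  fix v assume "v \<in> set vs"
  then obtain i where i: "i < length vs" "vs ! i = v" by (auto simp: in_set_conv_nth)
  then have "cv vs (int i) = v" unfolding cv_def by simp
  then show "v \<in> V" using cv_in_ce[of "int i"] ce_in_E edgeD by blast
qed

lemma card_set_vs: "card (set vs) = length vs"
  using distinct_vs by (simp add: distinct_card)

lemma cv_shift_surj: "v \<in> set vs \<Longrightarrow> \<exists>c\<in>{0..<L}. cv vs (a + c) = v"
proof -
  assume "v \<in> set vs"
  then obtain i where i: "i < length vs" "vs ! i = v" by (auto simp: in_set_conv_nth)
  define c where "c = (int i - a) mod L"
  have "c \<in> {0..<L}" using L_pos unfolding c_def by simp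
  moreover have "cv vs (a + c) = cv vs (int i)"
    unfolding cv_eq_iff c_def by (simp add: mod_eq_dvd_iff[symmetric] mod_add_right_eq)
  ultimately show ?thesis using i by (intro bexI[of _ c]) (auto simp: cv_def)
qed

lemma cv_shift_inj:
  "c \<in> {0..<L} \<Longrightarrow> c' \<in> {0..<L} \<Longrightarrow> cv vs (a + c) = cv vs (a + c') \<Longrightarrow> c = c'"
  unfolding cv_eq_iff using zdvd_eq_0_if_less[of L "c - c'"] by auto

lemma cv_shift_ne:
  "0 \<le> x \<Longrightarrow> x < L \<Longrightarrow> 0 \<le> y \<Longrightarrow> y < L \<Longrightarrow> x \<noteq> y \<Longrightarrow> cv vs (a + x) \<noteq> cv vs (a + y)"
  using cv_shift_inj by auto

lemma ce_shift_ne: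
  "0 \<le> x \<Longrightarrow> x < L \<Longrightarrow> 0 \<le> y \<Longrightarrow> y < L \<Longrightarrow> x \<noteq> y \<Longrightarrow> ce es (a + x) \<noteq> ce es (a + y)"
  unfolding ce_eq_iff using zdvd_eq_0_if_less[of L "x - y"] by auto

lemma card_shift_preimage: "card {c \<in> {0..<L}. cv vs (a + c) \<in> S} = card (S \<inter> set vs)"
proof -
  have "(\<lambda>c. cv vs (a + c)) ` {c \<in> {0..<L}. cv vs (a + c) \<in> S} = S \<inter> set vs"
  proof
    show "S \<inter> set vs \<subseteq> (\<lambda>c. cv vs (a + c)) ` {c \<in> {0..<L}. cv vs (a + c) \<in> S}"
    proof
      fix v assume v: "v \<in> S \<inter> set vs"
      then obtain c where "c \<in> {0..<L}" "cv vs (a + c) = v" using cv_shift_surj by blast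
      then show "v \<in> (\<lambda>c. cv vs (a + c)) ` {c \<in> {0..<L}. cv vs (a + c) \<in> S}"
        using v by (intro image_eqI[of _ _ c]) auto
    qed
    show "(\<lambda>c. cv vs (a + c)) ` {c \<in> {0..<L}. cv vs (a + c) \<in> S} \<subseteq> S \<inter> set vs"
      using cv_in_set by blast
  qed
  moreover have "inj_on (\<lambda>c. cv vs (a + c)) {c \<in> {0..<L}. cv vs (a + c) \<in> S}"
    by (rule inj_onI) (use cv_shift_inj in blast)
  ultimately show ?thesis using card_image by fastforce
qed

lemma deg_le_degC_add: "deg V E v \<le> degC V E vs v + (card V - length vs)"
proof -
  have "nbhd V E v \<subseteq> (nbhd V E v \<inter> set vs) \<union> (V - set vs)" unfolding nbhd_def by blast
  then have "card (nbhd V E v) \<le> card ((nbhd V E v \<inter> set vs) \<union> (V - set vs))"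
    using finite_V by (intro card_mono) (auto simp: nbhd_def)
  also have "\<dots> \<le> card (nbhd V E v \<inter> set vs) + card (V - set vs)" by (rule card_Un_le)
  also have "card (V - set vs) = card V - length vs"
    using set_vs_subset_V finite_V card_set_vs by (simp add: card_Diff_subset)
  finally show ?thesis unfolding deg_def degC_def .
qed

lemma no_four_in_edge:
  "e \<in> E \<Longrightarrow> a \<in> e \<Longrightarrow> b \<in> e \<Longrightarrow> c \<in> e \<Longrightarrow> d \<in> e \<Longrightarrow>
    a \<noteq> b \<Longrightarrow> a \<noteq> c \<Longrightarrow> a \<noteq> d \<Longrightarrow> b \<noteq> c \<Longrightarrow> b \<noteq> d \<Longrightarrow> c \<noteq> d \<Longrightarrow> False"
  using card_le_3_no_four_distinct[of e a b c d] edgeD[of e] by blast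

lemma card_ce_Diff_ends: "card (ce es x - {cv vs x, cv vs (x + 1)}) \<le> 1"
proof -
  have e: "finite (ce es x)" "card (ce es x) \<le> 3" using edgeD ce_in_E by auto
  have sub: "{cv vs x, cv vs (x + 1)} \<subseteq> ce es x" using cv_in_ce cv_succ_in_ce by blast
  have "card {cv vs x, cv vs (x + 1)} = 2" using cv_ne_succ by simp
  then show ?thesis using card_Diff_subset[OF finite_subset[OF sub e(1)] sub] e(2) by linarith
qed

lemma ce_Diff_ends_unique:
  assumes "y \<in> ce es x - {cv vs x, cv vs (x + 1)}" "y' \<in> ce es x - {cv vs x, cv vs (x + 1)}"
  shows "y = y'"
proof -
  have fin: "finite (ce es x - {cv vs x, cv vs (x + 1)})" using edgeD ce_in_E by blast
  have "card (ce es x - {cv vs x, cv vs (x + 1)}) \<le> Suc 0" using card_ce_Diff_ends by simp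
  then show ?thesis using card_le_Suc0_iff_eq[OF fin] assms by blast
qed

lemma no_outside_and_three_in_edge:
  assumes "e \<in> E" "u \<notin> set vs" "u \<in> e" "cv vs (a + x) \<in> e" "cv vs (a + y) \<in> e" "cv vs (a + z) \<in> e"
    "0 \<le> x" "x < L" "0 \<le> y" "y < L" "0 \<le> z" "z < L" "x \<noteq> y" "x \<noteq> z" "y \<noteq> z"
  shows False
proof -
  have "u \<noteq> cv vs (a + x)" "u \<noteq> cv vs (a + y)" "u \<noteq> cv vs (a + z)"
    using assms(2) cv_in_set by metis+
  moreover have "cv vs (a + x) \<noteq> cv vs (a + y)" "cv vs (a + x) \<noteq> cv vs (a + z)"
    "cv vs (a + y) \<noteq> cv vs (a + z)"
    using cv_shift_ne assms by auto
  ultimately show False using no_four_in_edge[OF assms(1,3-6)] by blast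
qed

lemma no_four_shifted_in_edge:
  assumes "e \<in> E" "cv vs (a + w) \<in> e" "cv vs (a + x) \<in> e" "cv vs (a + y) \<in> e" "cv vs (a + z) \<in> e"
    "0 \<le> w" "w < L" "0 \<le> x" "x < L" "0 \<le> y" "y < L" "0 \<le> z" "z < L"
    "w \<noteq> x" "w \<noteq> y" "w \<noteq> z" "x \<noteq> y" "x \<noteq> z" "y \<noteq> z"
  shows False
  using no_four_in_edge[OF assms(1-5)] cv_shift_ne assms(6-) by metis

lemma edge_eq_shifted_triple:
  assumes "e \<in> E" "cv vs (a + x) \<in> e" "cv vs (a + y) \<in> e" "cv vs (a + z) \<in> e"
    "0 \<le> x" "x < L" "0 \<le> y" "y < L" "0 \<le> z" "z < L" "x \<noteq> y" "x \<noteq> z" "y \<noteq> z"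
  shows "e = {cv vs (a + x), cv vs (a + y), cv vs (a + z)}"
  using card_le_3_eq_triple edgeD[OF assms(1)] assms(2-4) cv_shift_ne assms(5-) by metis

definition next_pos :: "int \<Rightarrow> int" where
  "next_pos p = (if p = L - 1 then 0 else p + 1)"

lemma next_pos_range: "0 \<le> p \<Longrightarrow> p < L \<Longrightarrow> 0 \<le> next_pos p \<and> next_pos p < L \<and> next_pos p \<noteq> p"
  unfolding next_pos_def using length_vs_ge_2 by auto

lemma cv_next_pos: "cv vs (a + next_pos p) = cv vs (a + p + 1)"
  unfolding cv_eq_iff next_pos_def by auto

lemma cv_next_pos_in_ce:
  "0 \<le> p \<Longrightarrow> p < L \<Longrightarrow> cv vs (a + p) \<in> ce es (a + p) \<and> cv vs (a + next_pos p) \<in> ce es (a + p)"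
  using cv_in_ce cv_succ_in_ce[of "a + p"] cv_next_pos by simp

lemma outside_vertex_in_ce_pos:
  assumes "e = ce es (a + p)" "u \<notin> set vs" "u \<in> e" "cv vs (a + x) \<in> e"
    "0 \<le> x" "x < L" "0 \<le> p" "p < L"
  shows "x = p \<or> x = next_pos p"
proof (rule ccontr)
  assume "\<not> ?thesis"
  moreover have "cv vs (a + p) \<in> e" "cv vs (a + next_pos p) \<in> e"
    using cv_next_pos_in_ce assms by auto
  moreover have "0 \<le> next_pos p \<and> next_pos p < L \<and> next_pos p \<noteq> p"
    using next_pos_range assms by auto
  ultimately show False
    using no_outside_and_three_in_edge[of e u a x p "next_pos p"] assms ce_in_E by auto
qed

lemma pair_in_ce_pos:
  assumes "e = ce es (a + p)" "cv vs (a + x) \<in> e" "cv vs (a + y) \<in> e"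
    "0 \<le> x" "x < L" "0 \<le> y" "y < L" "0 \<le> p" "p < L" "x \<noteq> y"
  shows "x = p \<or> x = next_pos p \<or> y = p \<or> y = next_pos p"
proof (rule ccontr)
  assume "\<not> ?thesis"
  moreover have "cv vs (a + p) \<in> e" "cv vs (a + next_pos p) \<in> e"
    using cv_next_pos_in_ce assms by auto
  moreover have "0 \<le> next_pos p \<and> next_pos p < L \<and> next_pos p \<noteq> p"
    using next_pos_range assms by auto
  ultimately show False
    using no_four_shifted_in_edge[of e a x y p "next_pos p"] assms ce_in_E by auto
qed

section \<open>Absorbing an outside vertex\<close>

(* Each absorb_... lemma below describes a Berge cycle on set vs \<union> {u}, so it concludes False. *)
lemma no_absorbing_cycle:
  fixes W :: "nat \<Rightarrow> 'a" and F :: "nat \<Rightarrow> 'a set"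
  assumes u: "u \<notin> set vs"
    and injW: "inj_on W {..<length vs + 1}" and injF: "inj_on F {..<length vs + 1}"
    and FE: "\<And>t. t < length vs + 1 \<Longrightarrow> F t \<in> E"
    and W1: "\<And>t. t < length vs + 1 \<Longrightarrow> W t \<in> F t"
    and W2: "\<And>t. t < length vs + 1 \<Longrightarrow> W ((t + 1) mod (length vs + 1)) \<in> F t"
    and Wr: "\<And>t. t < length vs + 1 \<Longrightarrow> W t \<in> insert u (set vs)"
  shows False
proof -
  define N where "N = length vs + 1"
  have "N \<ge> 2" using length_vs_ge_2 unfolding N_def by simp
  then have bc: "berge_cycle E (map W [0..<N]) (map F [0..<N])"
    using berge_cycle_of_fun[of N W F E] injW injF FE W1 W2 unfolding N_def by blast
  have sub: "set (map W [0..<N]) \<subseteq> insert u (set vs)"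
  proof
    fix x assume "x \<in> set (map W [0..<N])"
    then obtain t where "t < N" "x = W t" by auto
    then show "x \<in> insert u (set vs)" using Wr unfolding N_def by blast
  qed
  have "distinct (map W [0..<N])"
    using injW unfolding N_def distinct_map by (simp add: lessThan_atLeast0 del: upt_Suc)
  then have "card (set (map W [0..<N])) = card (insert u (set vs))"
    using u card_set_vs distinct_card unfolding N_def by fastforce
  then have "set (map W [0..<N]) = insert u (set vs)" using card_subset_eq[OF _ sub] by simp
  then have "set vs \<subset> set (map W [0..<N])" using u by auto
  then show False using maximal bc unfolding maximal_berge_cycle_def by blast
qed

definition rotation_vertex :: "'a \<Rightarrow> int \<Rightarrow> int \<Rightarrow> int \<Rightarrow> nat \<Rightarrow> 'a" where
  "rotation_vertex u a d c t = (if t = 0 then u else cv vs (a + rotation_pos L d c (int t)))"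

definition rotation_cycle_edge ::
    "'a set \<Rightarrow> 'a set \<Rightarrow> 'a set \<Rightarrow> 'a set \<Rightarrow> int \<Rightarrow> int \<Rightarrow> int \<Rightarrow> nat \<Rightarrow> 'a set" where
  "rotation_cycle_edge f g h1 h2 a d c t =
    (if t = 0 then f else if int t = L - 1 - c then h2 else if int t = L - d then h1
     else if int t = L then g else ce es (a + rotation_edge_pos L d c (int t)))"

context
  fixes a d c :: int
  assumes dc: "2 \<le> d" "d \<le> c" "c \<le> L - 2"
begin

lemma rotation_cycle_edge_step:
  "rotation_step L d c (int t) \<Longrightarrow>
    rotation_cycle_edge f g h1 h2 a d c t = ce es (a + rotation_edge_pos L d c (int t))"
  using rotation_step_not_special[OF dc] unfolding rotation_cycle_edge_def by fastforce

lemma not_rotation_step_cases: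
  "t < length vs + 1 \<Longrightarrow> \<not> rotation_step L d c (int t) \<Longrightarrow>
    t = 0 \<or> int t = L - 1 - c \<or> int t = L - d \<or> int t = L"
  using not_rotation_step[OF dc, of "int t"] by fastforce

lemma rotation_cycle_mem:
  assumes mem: "u \<in> f" "cv vs (a + (L - 1)) \<in> f" "u \<in> g" "cv vs (a + (d - 1)) \<in> g"
      "cv vs a \<in> h1" "cv vs (a + c) \<in> h1" "cv vs (a + d) \<in> h2" "cv vs (a + (c + 1)) \<in> h2"
    and t: "t < length vs + 1"
  shows "rotation_vertex u a d c t \<in> rotation_cycle_edge f g h1 h2 a d c t \<and>
    rotation_vertex u a d c ((t + 1) mod (length vs + 1)) \<in> rotation_cycle_edge f g h1 h2 a d c t"
proof (cases "rotation_step L d c (int t)")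
  case True
  define M where "M = rotation_edge_pos L d c (int t)"
  have "t \<noteq> 0" and succ: "t + 1 < length vs + 1" using rotation_step_not_special[OF dc True] by auto
  moreover have "int (t + 1) = int t + 1" by simp
  ultimately have "rotation_vertex u a d c t = cv vs (a + rotation_pos L d c (int t))"
    "rotation_vertex u a d c ((t + 1) mod (length vs + 1)) =
      cv vs (a + rotation_pos L d c (int t + 1))"
    unfolding rotation_vertex_def mod_less[OF succ] \<open>int (t + 1) = int t + 1\<close> by simp_all
  moreover have "cv vs (a + p) \<in> ce es (a + M)" if "p \<in> {M, M + 1}" for p
    using that cv_in_ce[of "a + M"] cv_succ_in_ce[of "a + M"]
      by (auto simp only: add.assoc insert_iff)
  ultimately show ?thesis using rotation_step_pos[OF dc True] rotation_cycle_edge_step[OF True]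
    unfolding M_def by simp
next
  case False
  note pos = rotation_pos_special[OF dc] and defs = rotation_vertex_def rotation_cycle_edge_def
  consider "t = 0" | "int t = L - 1 - c" | "int t = L - d" | "int t = L"
    using not_rotation_step_cases[OF t False] by blast
  then show ?thesis
  proof cases
    case 1
    then show ?thesis using pos(1) mem length_vs_ge_2 unfolding defs by simp
  next
    case 2
    have "t \<noteq> 0" and succ: "t + 1 < length vs + 1" "int (t + 1) = L - c" using 2 dc by auto
    then show ?thesis using 2 pos(2,3) mem unfolding defs mod_less[OF succ(1)] succ(2) by simp
  next
    case 3
    have "t \<noteq> 0" and succ: "t + 1 < length vs + 1" "int (t + 1) = L - d + 1" using 3 dc by auto
    then show ?thesis using 3 dc pos(4,5) mem unfolding defs mod_less[OF succ(1)] succ(2) by simp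
  next
    case 4
    have "t \<noteq> 0" "(t + 1) mod (length vs + 1) = 0" using 4 dc by auto
    then show ?thesis using 4 dc pos(6) mem unfolding defs by simp
  qed
qed

lemma inj_on_rotation_vertex:
  assumes u: "u \<notin> set vs"
  shows "inj_on (rotation_vertex u a d c) {..<length vs + 1}"
proof (rule inj_onI)
  fix t t' assume t: "t \<in> {..<length vs + 1}" "t' \<in> {..<length vs + 1}"
    "rotation_vertex u a d c t = rotation_vertex u a d c t'"
  show "t = t'"
  proof (cases "t = 0 \<or> t' = 0")
    case True then show ?thesis
      using t u cv_in_set unfolding rotation_vertex_def by (auto split: if_splits)
  next
    case False
    then have "rotation_pos L d c (int t) = rotation_pos L d c (int t')"
      using t rotation_pos_range[OF dc] cv_shift_inj unfolding rotation_vertex_def by simp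
    then have "int t = int t'" using rotation_pos_inj[OF dc, of "int t" "int t'"] t False by auto
    then show ?thesis by simp
  qed
qed

lemma inj_on_rotation_cycle_edge:
  assumes dist: "f \<noteq> g" "f \<noteq> h1" "f \<noteq> h2" "g \<noteq> h1" "g \<noteq> h2" "h1 \<noteq> h2"
    and off_path: "\<And>p. (c + 1 \<le> p \<and> p \<le> L - 2) \<or> (d \<le> p \<and> p \<le> c - 1) \<or> (0 \<le> p \<and> p \<le> d - 2) \<Longrightarrow>
        ce es (a + p) \<notin> {f, g, h1, h2}"
  shows "inj_on (rotation_cycle_edge f g h1 h2 a d c) {..<length vs + 1}"
proof (rule inj_onI)
  let ?F = "rotation_cycle_edge f g h1 h2 a d c" and ?step = "rotation_step L d c"
    and ?m = "rotation_edge_pos L d c"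
  fix t t' assume t: "t \<in> {..<length vs + 1}" "t' \<in> {..<length vs + 1}" "?F t = ?F t'"
  have m_range: "0 \<le> ?m T \<and> ?m T < L" if "?step T" for T
    using rotation_edge_pos_range[OF dc that] dc by linarith
  have special: "?F s \<in> {f, g, h1, h2}" if "s < length vs + 1" "\<not> ?step (int s)" for s
    using not_rotation_step_cases[OF that] unfolding rotation_cycle_edge_def by auto
  have off: "?F s \<noteq> ?F s'" if "s < length vs + 1" "\<not> ?step (int s)" "?step (int s')" for s s'
    using special[OF that(1,2)] off_path[OF rotation_edge_pos_range[OF dc that(3)]]
      rotation_cycle_edge_step[OF that(3)] by auto
  show "t = t'"
  proof (cases "?step (int t)"; cases "?step (int t')")
    assume step: "?step (int t)" "?step (int t')"
    then have "ce es (a + ?m (int t)) = ce es (a + ?m (int t'))"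
      using t(3) rotation_cycle_edge_step by simp
    then have "?m (int t) = ?m (int t')"
      using ce_shift_ne m_range[OF step(1)] m_range[OF step(2)] by blast
    then show ?thesis using rotation_edge_pos_inj[OF dc step] by simp
  next
    assume "\<not> ?step (int t)" "\<not> ?step (int t')"
    then have "t = 0 \<or> int t = L - 1 - c \<or> int t = L - d \<or> int t = L"
      "t' = 0 \<or> int t' = L - 1 - c \<or> int t' = L - d \<or> int t' = L"
      using not_rotation_step_cases t by auto
    then show ?thesis
    proof (elim disjE)
    qed (use t(3) dist dc vs_not_Nil in \<open>simp_all add: rotation_cycle_edge_def\<close>)
  next
    assume "\<not> ?step (int t)" "?step (int t')"
    then show ?thesis using off t by blast
  next
    assume "?step (int t)" "\<not> ?step (int t')"
    then show ?thesis using off[of t' t] t by force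
  qed
qed

lemma absorb_by_rotation:
  assumes u: "u \<notin> set vs" and E: "f \<in> E" "g \<in> E" "h1 \<in> E" "h2 \<in> E"
    and mem: "u \<in> f" "cv vs (a + (L - 1)) \<in> f" "u \<in> g" "cv vs (a + (d - 1)) \<in> g"
      "cv vs a \<in> h1" "cv vs (a + c) \<in> h1" "cv vs (a + d) \<in> h2" "cv vs (a + (c + 1)) \<in> h2"
    and dist: "f \<noteq> g" "f \<noteq> h1" "f \<noteq> h2" "g \<noteq> h1" "g \<noteq> h2" "h1 \<noteq> h2"
    and off_path: "\<And>p. (c + 1 \<le> p \<and> p \<le> L - 2) \<or> (d \<le> p \<and> p \<le> c - 1) \<or> (0 \<le> p \<and> p \<le> d - 2) \<Longrightarrow>
        ce es (a + p) \<notin> {f, g, h1, h2}"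
  shows False
proof (rule no_absorbing_cycle[OF u inj_on_rotation_vertex[OF u]
      inj_on_rotation_cycle_edge[OF dist off_path]])
  show "rotation_cycle_edge f g h1 h2 a d c t \<in> E" for t
    using E ce_in_E unfolding rotation_cycle_edge_def by simp
  show "rotation_vertex u a d c t \<in> insert u (set vs)" for t
    using cv_in_set unfolding rotation_vertex_def by simp
qed (use rotation_cycle_mem[OF mem] in blast)+

end

(* The cycle v_{p+1}, ..., v_{p+L} = v_p, u. *)
lemma absorb_between_consecutive:
  assumes u: "u \<notin> set vs" and E: "f \<in> E" "g \<in> E"
    and mem: "cv vs p \<in> f" "u \<in> f" "u \<in> g" "cv vs (p + 1) \<in> g" and fg: "f \<noteq> g"
    and off_path: "\<And>r. 0 \<le> r \<Longrightarrow> r \<le> L - 2 \<Longrightarrow> ce es (p + 1 + r) \<notin> {f, g}"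
  shows False
proof -
  define W where "W t = (if t < length vs then cv vs (p + 1 + int t) else u)" for t :: nat
  define F where "F t = (if t + 1 < length vs then ce es (p + 1 + int t)
    else if t + 1 = length vs then f else g)" for t :: nat
  have W_F: "W t \<in> F t \<and> W ((t + 1) mod (length vs + 1)) \<in> F t" if t: "t < length vs + 1" for t
  proof -
    consider "t + 1 < length vs" | "t + 1 = length vs" | "t = length vs" using t by linarith
    then show ?thesis
    proof cases
      case 1
      then show ?thesis unfolding W_def F_def using cv_in_ce cv_succ_in_ce[of "p + 1 + int t"]
        by (simp add: algebra_simps)
    next
      case 2
      then have "1 + int t = L" by simp
      then have "cv vs (p + 1 + int t) = cv vs p" unfolding cv_eq_iff by (simp add: algebra_simps)
      then show ?thesis unfolding W_def F_def using 2 mem by auto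
    next
      case 3
      then show ?thesis unfolding W_def F_def using mem length_vs_ge_2 by auto
    qed
  qed
  show False
  proof (rule no_absorbing_cycle[OF u, of W F])
    show "inj_on W {..<length vs + 1}"
    proof (rule inj_onI)
      fix t t' assume t: "t \<in> {..<length vs + 1}" "t' \<in> {..<length vs + 1}" "W t = W t'"
      show "t = t'"
      proof (cases "t < length vs \<and> t' < length vs")
        case True
        then have "int t = int t'"
          using t cv_shift_inj[of "int t" "int t'" "p + 1"] unfolding W_def by simp
        then show ?thesis by simp
      next
        case False then show ?thesis using t u cv_in_set unfolding W_def by (auto split: if_splits)
      qed
    qed
    show "inj_on F {..<length vs + 1}"
    proof (rule inj_onI)
      fix t t' assume t: "t \<in> {..<length vs + 1}" "t' \<in> {..<length vs + 1}" "F t = F t'"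
      show "t = t'"
      proof (cases "t + 1 < length vs \<and> t' + 1 < length vs")
        case True
        then have "int t = int t'"
          using t ce_shift_ne[of "int t" "int t'" "p + 1"] unfolding F_def by fastforce
        then show ?thesis by simp
      next
        case False
        have "f \<noteq> ce es (p + 1 + int s)" "g \<noteq> ce es (p + 1 + int s)" if "s + 1 < length vs" for s
          using off_path[of "int s"] that by auto
        then show ?thesis using False t fg unfolding F_def by (auto split: if_splits)
      qed
    qed
    show "F t \<in> E" for t using E ce_in_E unfolding F_def by auto
    show "W t \<in> insert u (set vs)" for t using cv_in_set unfolding W_def by auto
  qed (use W_F in blast)+
qed

lemma absorb_by_crossing_chords:
  fixes a d c :: int
  assumes u: "u \<notin> set vs" and dc: "2 \<le> d" "d \<le> c" "c \<le> L - 2"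
    and E: "f \<in> E" "g \<in> E" "h1 \<in> E" "h2 \<in> E"
    and mem: "u \<in> f" "cv vs (a + (L - 1)) \<in> f" "u \<in> g" "cv vs (a + (d - 1)) \<in> g"
      "cv vs a \<in> h1" "cv vs (a + c) \<in> h1" "cv vs (a + d) \<in> h2" "cv vs (a + (c + 1)) \<in> h2"
    and fg: "f \<noteq> g" "f \<noteq> ce es (a + (L - 2))" "g \<noteq> ce es (a + (d - 2))"
    and dist: "f \<noteq> h2" "h1 \<noteq> h2"
    and off_path: "\<And>p. (c + 1 \<le> p \<and> p \<le> L - 2) \<or> (d \<le> p \<and> p \<le> c - 1) \<or> (0 \<le> p \<and> p \<le> d - 2) \<Longrightarrow>
        ce es (a + p) \<notin> {h1, h2}"
  shows False
proof (rule absorb_by_rotation[OF dc u E mem fg(1) _ dist(1) _ _ dist(2)])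
  have a0: "cv vs (a + 0) = cv vs a" by simp
  show "f \<noteq> h1"
    using no_outside_and_three_in_edge[OF E(1) u mem(1,2), of 0 c] mem(5,6) a0 dc vs_not_Nil by auto
  show "g \<noteq> h1"
    using no_outside_and_three_in_edge[OF E(2) u mem(3,4), of 0 c] mem(5,6) a0 dc by auto
  show "g \<noteq> h2"
    using no_outside_and_three_in_edge[OF E(2) u mem(3,4), of d "c + 1"] mem(7,8) dc by auto
  fix p assume p: "(c + 1 \<le> p \<and> p \<le> L - 2) \<or> (d \<le> p \<and> p \<le> c - 1) \<or> (0 \<le> p \<and> p \<le> d - 2)"
  then have p_range: "0 \<le> p" "p \<le> L - 2" and next_p: "next_pos p = p + 1"
    using dc unfolding next_pos_def by auto
  have "f \<noteq> ce es (a + p)"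
  proof
    assume "f = ce es (a + p)"
    then have "L - 1 = p \<or> L - 1 = next_pos p"
      using outside_vertex_in_ce_pos[OF \<open>f = ce es (a + p)\<close> u mem(1,2)] p_range dc by auto
    then show False using \<open>f = ce es (a + p)\<close> fg(2) p_range next_p by auto
  qed
  moreover have "g \<noteq> ce es (a + p)"
  proof
    assume "g = ce es (a + p)"
    then have "d - 1 = p \<or> d - 1 = next_pos p"
      using outside_vertex_in_ce_pos[OF \<open>g = ce es (a + p)\<close> u mem(3,4)] p_range dc by auto
    then show False using \<open>g = ce es (a + p)\<close> fg(3) p next_p dc by auto
  qed
  ultimately show "ce es (a + p) \<notin> {f, g, h1, h2}" using off_path[OF p] by auto
qed

lemma absorb_into_gap:
  assumes u: "u \<notin> set vs" and d: "2 \<le> d" "d \<le> L - 3" and E: "f \<in> E" "g \<in> E"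
    and mem: "u \<in> f" "cv vs (a + (L - 1)) \<in> f" "cv vs (a + d) \<in> f" "u \<in> g" "cv vs (a + (d - 1)) \<in> g"
    and fg: "f \<noteq> g" "g \<noteq> ce es (a + (d - 2))"
  shows False
proof (rule absorb_between_consecutive[OF u E(2,1), of "a + (d - 1)"])
  show "cv vs (a + (d - 1) + 1) \<in> f" using mem by (simp add: algebra_simps)
  fix r :: int assume r: "0 \<le> r" "r \<le> L - 2"
  define p where "p = (if d + r < L then d + r else d + r - L)"
  have p: "0 \<le> p" "p < L" using r d unfolding p_def by auto
  have "ce es (a + (d - 1) + 1 + r) = ce es (a + p)"
    unfolding ce_eq_iff p_def by (simp add: algebra_simps)
  moreover have "g \<noteq> ce es (a + p)"
  proof
    assume gp: "g = ce es (a + p)"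
    then have "d - 1 = p \<or> d - 1 = next_pos p"
      using outside_vertex_in_ce_pos[OF gp u mem(4,5)] p d by auto
    then have "p = d - 2" using p r d unfolding p_def next_pos_def by (auto split: if_splits)
    then show False using gp fg by simp
  qed
  moreover have "f \<noteq> ce es (a + p)"
  proof
    assume fp: "f = ce es (a + p)"
    have "L - 1 = p \<or> L - 1 = next_pos p"
      using outside_vertex_in_ce_pos[OF fp u mem(1,2)] p d by auto
    moreover have "d = p \<or> d = next_pos p"
      using outside_vertex_in_ce_pos[OF fp u mem(1,3)] p d by auto
    ultimately show False using p d unfolding next_pos_def by (auto split: if_splits)
  qed
  ultimately show "ce es (a + (d - 1) + 1 + r) \<notin> {g, f}" by simp
qed (use mem fg in auto)

(* Otherwise the chords reroute the cycle through u. *)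
lemma crossing_chords_force_triple_edge:
  fixes a d c :: int
  assumes u: "u \<notin> set vs" and dc: "2 \<le> d" "d + 1 \<le> c" "c \<le> L - 2"
    and E: "f \<in> E" "g \<in> E" "h1 \<in> E" "h2 \<in> E"
    and mem: "u \<in> f" "cv vs (a + (L - 1)) \<in> f" "u \<in> g" "cv vs (a + (d - 1)) \<in> g"
      "cv vs a \<in> h1" "cv vs (a + c) \<in> h1" "cv vs (a + d) \<in> h2" "cv vs (a + (c + 1)) \<in> h2"
    and fg: "f \<noteq> g" "f \<noteq> ce es (a + (L - 2))" "g \<noteq> ce es (a + (d - 2))"
    and not_in: "cv vs (a + c) \<notin> ce es a" "cv vs (a + (c + 1)) \<notin> ce es (a + d)"
  shows "ce es (a + (c - 1)) = {cv vs a, cv vs (a + c), cv vs (a + (c - 1))} \<or>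
         ce es (a + (c + 1)) = {cv vs (a + d), cv vs (a + (c + 1)), cv vs (a + (c + 2))}"
proof (rule ccontr)
  assume no_triple: "\<not> ?thesis"
  have a0: "cv vs (a + 0) = cv vs a" "ce es (a + 0) = ce es a" by simp_all
  show False
  proof (cases "c = L - 2 \<and> f = h2")
    case True
    then show False
      using absorb_into_gap[OF u _ _ E(1,2) mem(1,2) _ mem(3,4) fg(1,3)] mem(7) dc by simp
  next
    case False
    show False
    proof (rule absorb_by_crossing_chords[OF u _ _ dc(3) E mem fg])
      show "f \<noteq> h2"
      proof
        assume "f = h2"
        then have "c \<noteq> L - 2" using False by simp
        then show False using no_outside_and_three_in_edge[of f u a "L - 1" d "c + 1"] E mem u dc
            \<open>f = h2\<close> by auto
      qed
      show "h1 \<noteq> h2" using no_four_shifted_in_edge[of h1 a 0 c d "c + 1"] E mem dc a0 by auto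
      fix p assume p_ranges: "(c + 1 \<le> p \<and> p \<le> L - 2) \<or> (d \<le> p \<and> p \<le> c - 1) \<or> (0 \<le> p \<and> p \<le> d - 2)"
      have p: "0 \<le> p" "p < L" "p \<le> L - 2" and next_p: "next_pos p = p + 1"
        using p_ranges dc unfolding next_pos_def by auto
      have "h1 \<noteq> ce es (a + p)"
      proof
        assume h1: "h1 = ce es (a + p)"
        have "0 = p \<or> 0 = next_pos p \<or> c = p \<or> c = next_pos p"
          using pair_in_ce_pos[OF h1, of 0 c] mem(5,6) a0 p dc by auto
        then have "p = 0 \<or> p = c - 1" using next_p p_ranges dc by auto
        moreover have "p \<noteq> 0" using h1 mem(6) not_in(1) by auto
        moreover have "cv vs (a + (c - 1)) \<in> h1" if "p = c - 1"
          using h1 that cv_next_pos_in_ce[of p a] p by simp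
        ultimately show False
          using edge_eq_shifted_triple[of h1 a 0 c "c - 1"] E mem a0 dc no_triple h1 by auto
      qed
      moreover have "h2 \<noteq> ce es (a + p)"
      proof
        assume h2: "h2 = ce es (a + p)"
        have "d = p \<or> d = next_pos p \<or> c + 1 = p \<or> c + 1 = next_pos p"
          using pair_in_ce_pos[OF h2, of d "c + 1"] mem(7,8) p dc by auto
        then have "p = d \<or> p = c + 1" using next_p p_ranges dc by auto
        moreover have "p \<noteq> d" using h2 mem(8) not_in(2) by auto
        moreover have "cv vs (a + (c + 2)) \<in> h2" if "p = c + 1"
          using h2 that cv_next_pos_in_ce[of p a] p next_p by (simp add: add.assoc)
        ultimately show False
          using edge_eq_shifted_triple[of h2 a d "c + 1" "c + 2"] E mem dc p no_triple h2 by auto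
      qed
      ultimately show "ce es (a + p) \<notin> {h1, h2}" by auto
    qed (use dc in auto)
  qed
qed

lemma chord_forces_cycle_edge:
  fixes a d :: int
  assumes u: "u \<notin> set vs" and d: "2 \<le> d" "d \<le> L - 2"
    and E: "f \<in> E" "g \<in> E" "h \<in> E"
    and mem: "u \<in> f" "cv vs (a + (L - 1)) \<in> f" "u \<in> g" "cv vs (a + (d - 1)) \<in> g"
      "cv vs a \<in> h" "cv vs (a + d) \<in> h"
    and fg: "f \<noteq> g" "f \<noteq> ce es (a + (L - 2))" "g \<noteq> ce es (a + (d - 2))"
  shows "cv vs (a + d) \<in> ce es a \<or> cv vs a \<in> ce es (a + d)"
proof (rule ccontr)
  assume not_in: "\<not> ?thesis"
  have a0: "cv vs (a + 0) = cv vs a" "ce es (a + 0) = ce es a" by simp_all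
  have mem': "cv vs (a + d) \<in> ce es (a + d)" "cv vs (a + (d + 1)) \<in> ce es (a + d)"
    using cv_next_pos_in_ce[of d a] d unfolding next_pos_def by auto
  show False
  proof (rule absorb_by_crossing_chords[OF u d(1) order.refl d(2) E ce_in_E mem mem' fg])
    show "f \<noteq> ce es (a + d)"
    proof
      assume "f = ce es (a + d)"
      then have "L - 1 = d \<or> L - 1 = next_pos d"
        using outside_vertex_in_ce_pos[OF \<open>f = ce es (a + d)\<close> u mem(1,2)] d vs_not_Nil by auto
      then have "d = L - 2" using d unfolding next_pos_def by (auto split: if_splits)
      then show False using \<open>f = ce es (a + d)\<close> fg by simp
    qed
    show "h \<noteq> ce es (a + d)" using not_in mem(5) by auto
    fix p assume p_ranges: "(d + 1 \<le> p \<and> p \<le> L - 2) \<or> (d \<le> p \<and> p \<le> d - 1) \<or> (0 \<le> p \<and> p \<le> d - 2)"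
    have p: "0 \<le> p" "p < L" and next_p: "next_pos p = p + 1"
      using p_ranges d unfolding next_pos_def by auto
    have "h \<noteq> ce es (a + p)"
    proof
      assume h: "h = ce es (a + p)"
      have "0 = p \<or> 0 = next_pos p \<or> d = p \<or> d = next_pos p"
        using pair_in_ce_pos[OF h, of 0 d] mem(5,6) a0 p d by auto
      then have "p = 0" using next_p p_ranges d by auto
      then show False using h mem(6) not_in by simp
    qed
    moreover have "ce es (a + d) \<noteq> ce es (a + p)" using ce_shift_ne[of d p a] p_ranges d by auto
    ultimately show "ce es (a + p) \<notin> {h, ce es (a + d)}" by auto
  qed
qed

section \<open>Bridges\<close>

lemma shift_mods_distinct:
  assumes d: "d = (j - i) mod L" "2 \<le> d" "d \<le> L - 2" and c: "1 \<le> c" "c \<le> L - 1" "c \<noteq> d"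
  shows "i mod L \<noteq> (i + c) mod L" "(i + c) mod L \<noteq> j mod L" "i mod L \<noteq> j mod L"
proof -
  have jd: "L dvd (j - (i + d))" using zdvd_diff_add_mod d(1) by simp
  show "i mod L \<noteq> (i + c) mod L"
    using zdvd_eq_0_if_less[of L "- c"] c by (auto simp: mod_eq_dvd_iff)
  show "(i + c) mod L \<noteq> j mod L"
  proof
    assume "(i + c) mod L = j mod L"
    then have "L dvd (i + c) - j" by (simp add: mod_eq_dvd_iff)
    then have "L dvd ((i + c) - j) + (j - (i + d))" using jd by (rule dvd_add)
    then have "L dvd c - d" by simp
    then show False using zdvd_eq_0_if_less[of L "c - d"] c d(2,3) by simp
  qed
  show "i mod L \<noteq> j mod L"
  proof
    assume "i mod L = j mod L"
    then have "L dvd i - j" by (simp add: mod_eq_dvd_iff)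
    then have "L dvd (i - j) + (j - (i + d))" using jd by (rule dvd_add)
    then have "L dvd - d" by simp
    then show False using zdvd_eq_0_if_less[of L "- d"] d(2,3) by simp
  qed
qed

lemma on_seg_shift_iff:
  assumes d: "d = (j - i) mod L" "2 \<le> d" "d \<le> L - 2" and c: "1 \<le> c" "c \<le> L - 1" "c \<noteq> d"
  shows "on_seg L i (i + c) j \<longleftrightarrow> c < d" "on_seg L j (i + c) i \<longleftrightarrow> d < c"
proof -
  note distinct = shift_mods_distinct[OF assms]
  have jd: "L dvd (j - (i + d)) + L" using zdvd_diff_add_mod d(1) by simp
  have "(i + c - i) mod L = c" using c by simp
  then show "on_seg L i (i + c) j \<longleftrightarrow> c < d" unfolding on_seg_def using distinct d(1) by simp
  have "i - j - (L - d) = - ((j - (i + d)) + L)" by simp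
  then have "L dvd i - j - (L - d)" using jd by (metis dvd_minus_iff)
  then have "(i - j) mod L = L - d" using mod_eq_if_dvd_diff[of "L - d" L "i - j"] d(2,3) by simp
  moreover have "(i + c - j) mod L = (if d < c then c - d else c - d + L)"
  proof (cases "d < c")
    case True
    have "i + c - j - (c - d) = - ((j - (i + d)) + L) + L" by simp
    then have "L dvd i + c - j - (c - d)"
      using jd by (metis dvd_add_left_iff dvd_minus_iff dvd_refl)
    then show ?thesis using mod_eq_if_dvd_diff[of "c - d" L "i + c - j"] True c d(2,3) by simp
  next
    case False
    have "i + c - j - (c - d + L) = - ((j - (i + d)) + L)" by simp
    then have "L dvd i + c - j - (c - d + L)" using jd by (metis dvd_minus_iff)
    then show ?thesis
      using mod_eq_if_dvd_diff[of "c - d + L" L "i + c - j"] False c d(2,3) jd by simp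
  qed
  ultimately show "on_seg L j (i + c) i \<longleftrightarrow> d < c" unfolding on_seg_def using distinct c d by auto
qed

lemma bridge_swap: "bridge vs es i j k e \<longleftrightarrow> bridge vs es j i k e"
  unfolding bridge_def by (simp only: disj_ac)

lemma bridge_cong_mod:
  assumes "L dvd (k - k')"
  shows "bridge vs es i j k e \<longleftrightarrow> bridge vs es i j k' e"
proof -
  have v: "cv vs (k + x) = cv vs (k' + x)" "cv vs (k - x) = cv vs (k' - x)" for x
    unfolding cv_eq_iff using assms by (simp_all add: algebra_simps)
  have e: "ce es (k + x) = ce es (k' + x)" "ce es (k - x) = ce es (k' - x)" for x
    unfolding ce_eq_iff using assms by (simp_all add: algebra_simps)
  have "k mod L = k' mod L" "(k - a) mod L = (k' - a) mod L" for a
    using assms by (simp_all add: mod_eq_dvd_iff)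
  then have s: "on_seg L a k b \<longleftrightarrow> on_seg L a k' b" for a b unfolding on_seg_def by simp
  have "cv vs k = cv vs k'" using v(1)[of 0] by simp
  then show ?thesis unfolding bridge_def by (simp only: v e s)
qed

(* p is the position of the bridge e and x that of its third vertex, v_i (x = 0) or v_j (x = d). *)
lemma bridge_edge_form:
  assumes d: "d = (j - i) mod L" "2 \<le> d" "d \<le> L - 2" and c: "1 \<le> c" "c \<le> L - 1" "c \<noteq> d"
    and br: "bridge vs es i j (i + c) e"
  shows "\<exists>p x. 0 \<le> p \<and> p < L \<and> e = ce es (i + p) \<and> cv vs (i + x) \<in> e \<and> (x = 0 \<or> x = d) \<and>
    x \<noteq> p \<and> x \<noteq> next_pos p \<and>
    ((p = (c + 1) mod L \<and> (x = 0 \<longleftrightarrow> c < d)) \<or> (p = c - 1 \<and> (x = d \<longleftrightarrow> c < d)))"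
proof -
  have vj: "cv vs j = cv vs (i + d)" unfolding cv_eq_iff using zdvd_diff_add_mod d(1) by simp
  have shift: "i + c + 1 = i + (c + 1)" "i + c - 1 = i + (c - 1)" "cv vs (i + 0) = cv vs i"
    by simp_all
  have os: "on_seg L i (i + c) j \<longleftrightarrow> c < d" "on_seg L j (i + c) i \<longleftrightarrow> d < c"
    using on_seg_shift_iff[OF d c] by simp_all
  have next_c: "next_pos (c - 1) = c" using c d unfolding next_pos_def by auto
  from br[unfolded bridge_def] show ?thesis
  proof (elim disjE conjE)
    assume "on_seg L i (i + c) j" "e = ce es (i + c + 1)"
      "ce es (i + c + 1) = {cv vs i, cv vs (i + c + 1), cv vs (i + c + 2)}"
    moreover have "(c + 1) mod L = c + 1" "next_pos (c + 1) = c + 2"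
      using \<open>on_seg L i (i + c) j\<close> os c d unfolding next_pos_def by auto
    ultimately show ?thesis using os c d shift by (intro exI[of _ "c + 1"] exI[of _ 0]) simp
  next
    assume "on_seg L i (i + c) j" "e = ce es (i + c - 1)"
      "ce es (i + c - 1) = {cv vs j, cv vs (i + c), cv vs (i + c - 1)}"
    then show ?thesis using os c d shift vj next_c by (intro exI[of _ "c - 1"] exI[of _ d]) simp
  next
    assume "on_seg L j (i + c) i" "e = ce es (i + c - 1)"
      "ce es (i + c - 1) = {cv vs i, cv vs (i + c), cv vs (i + c - 1)}"
    then show ?thesis using os c d shift next_c by (intro exI[of _ "c - 1"] exI[of _ 0]) simp
  next
    assume seg: "on_seg L j (i + c) i" and e: "e = ce es (i + c + 1)"
      "ce es (i + c + 1) = {cv vs j, cv vs (i + c + 1), cv vs (i + c + 2)}"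
    then have "d < c" "cv vs (i + d) \<in> e" using os vj by simp_all
    show ?thesis
    proof (cases "c = L - 1")
      case True
      have "e = ce es (i + 0)" unfolding e(1) ce_eq_iff using True by simp
      moreover have "next_pos 0 = 1" "(c + 1) mod L = 0" unfolding next_pos_def
        using True length_vs_ge_2 by auto
      ultimately show ?thesis using \<open>d < c\<close> \<open>cv vs (i + d) \<in> e\<close> d L_pos
        by (intro exI[of _ 0] exI[of _ d]) simp
    next
      case False
      have "next_pos (c + 1) \<noteq> d" "(c + 1) mod L = c + 1"
        using \<open>d < c\<close> c d False unfolding next_pos_def by auto
      then show ?thesis using \<open>d < c\<close> \<open>cv vs (i + d) \<in> e\<close> e(1) c d False shift
        by (intro exI[of _ "c + 1"] exI[of _ d]) simp
    qed
  qed
qed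

lemma bridge_index_arith:
  fixes c c' d p x :: int
  assumes "x = 0 \<or> x = d" "d \<noteq> 0" "c \<noteq> d" "c' \<noteq> d" "c \<noteq> d - 1" "c' \<noteq> d - 1"
    "(p = c + 1 \<and> (x = 0 \<longleftrightarrow> c < d)) \<or> (p = c - 1 \<and> (x = d \<longleftrightarrow> c < d))"
    "(p = c' + 1 \<and> (x = 0 \<longleftrightarrow> c' < d)) \<or> (p = c' - 1 \<and> (x = d \<longleftrightarrow> c' < d))"
  shows "c = c'"
  using assms by (elim disjE) auto

lemma bridge_determines_index:
  assumes d: "d = (j - i) mod L" "2 \<le> d" "d \<le> L - 2"
    and c: "(1 \<le> c \<and> c \<le> d - 2) \<or> (d + 1 \<le> c \<and> c \<le> L - 2)"
    and c': "(1 \<le> c' \<and> c' \<le> d - 2) \<or> (d + 1 \<le> c' \<and> c' \<le> L - 2)"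
    and br: "bridge vs es i j (i + c) e" "bridge vs es i j (i + c') e"
  shows "c = c'"
proof -
  have c_range: "1 \<le> c" "c \<le> L - 1" "c \<noteq> d" "1 \<le> c'" "c' \<le> L - 1" "c' \<noteq> d"
    using c c' d by auto
  obtain p x where P: "0 \<le> p" "p < L" "e = ce es (i + p)" "cv vs (i + x) \<in> e" "x = 0 \<or> x = d"
    "x \<noteq> p" "x \<noteq> next_pos p" "(p = (c + 1) mod L \<and> (x = 0 \<longleftrightarrow> c < d)) \<or> (p = c - 1 \<and> (x = d \<longleftrightarrow> c < d))"
    using bridge_edge_form[OF d c_range(1-3) br(1)] by blast
  obtain p' x' where P': "0 \<le> p'" "p' < L" "e = ce es (i + p')" "cv vs (i + x') \<in> e"
    "x' = 0 \<or> x' = d" "x' \<noteq> p'" "x' \<noteq> next_pos p'"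
    "(p' = (c' + 1) mod L \<and> (x' = 0 \<longleftrightarrow> c' < d)) \<or> (p' = c' - 1 \<and> (x' = d \<longleftrightarrow> c' < d))"
    using bridge_edge_form[OF d c_range(4-6) br(2)] by blast
  have "p = p'" using ce_shift_ne[of p p' i] P P' by auto
  have "x = x'"
  proof (rule ccontr)
    assume "x \<noteq> x'"
    have "e \<in> E" using P(3) ce_in_E by simp
    moreover have "cv vs (i + p) \<in> e" "cv vs (i + next_pos p) \<in> e"
      using cv_next_pos_in_ce[of p i] P by auto
    moreover have "0 \<le> next_pos p" "next_pos p < L" "next_pos p \<noteq> p" using next_pos_range P by auto
    moreover have "0 \<le> x" "x < L" "0 \<le> x'" "x' < L" using P(5) P'(5) d by auto
    moreover have "x' \<noteq> p" "x' \<noteq> next_pos p" using P'(6,7) \<open>p = p'\<close> by simp_all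
    ultimately show False
      using no_four_shifted_in_edge[of e i x x' p "next_pos p"] P(1,2,4,6,7) P'(4) \<open>x \<noteq> x'\<close>
      by (metis (no_types))
  qed
  have "(c + 1) mod L = c + 1" "(c' + 1) mod L = c' + 1" using c c' d by auto
  then have h: "(p = c + 1 \<and> (x = 0 \<longleftrightarrow> c < d)) \<or> (p = c - 1 \<and> (x = d \<longleftrightarrow> c < d))"
    "(p = c' + 1 \<and> (x = 0 \<longleftrightarrow> c' < d)) \<or> (p = c' - 1 \<and> (x = d \<longleftrightarrow> c' < d))"
    using P(8) P'(8) \<open>p = p'\<close> \<open>x = x'\<close> by simp_all
  show ?thesis by (rule bridge_index_arith[OF P(5) _ _ _ _ _ h]) (use c c' d(2) in auto)
qed

lemma card_le_card_bridges:
  assumes d: "d = (j - i) mod L" "2 \<le> d" "d \<le> L - 2"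
    and X: "X \<subseteq> {1..d - 2} \<union> {d + 1..L - 2}" and br: "\<And>c. c \<in> X \<Longrightarrow> \<exists>e. bridge vs es i j (i + c) e"
  shows "card X \<le> card (bridges vs es i j)"
proof -
  define \<beta> where "\<beta> c = (SOME e. bridge vs es i j (i + c) e)" for c
  have \<beta>: "bridge vs es i j (i + c) (\<beta> c)" if "c \<in> X" for c
    unfolding \<beta>_def using br[OF that] by (rule someI_ex)
  have X_range: "(1 \<le> c \<and> c \<le> d - 2) \<or> (d + 1 \<le> c \<and> c \<le> L - 2)" if "c \<in> X" for c
    using X that by auto
  have "inj_on \<beta> X"
    by (rule inj_onI) (use \<beta> bridge_determines_index[OF d X_range X_range] in metis)
  moreover have "\<beta> ` X \<subseteq> bridges vs es i j"
  proof
    fix e assume "e \<in> \<beta> ` X"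
    then obtain c where c: "c \<in> X" "e = \<beta> c" by blast
    define k where "k = (i + c) mod L"
    have k: "k \<in> {0..<L}" unfolding k_def using L_pos by simp
    have kc: "L dvd (k - (i + c))" unfolding k_def by (metis dvd_minus_mod dvd_diff_commute)
    have jd: "L dvd (j - (i + d))" using zdvd_diff_add_mod d(1) by simp
    have "k \<noteq> i"
    proof
      assume "k = i"
      then show False using kc zdvd_eq_0_if_less[of L "- c"] X_range[OF c(1)] d by auto
    qed
    moreover have "k \<noteq> j"
    proof
      assume "k = j"
      have "L dvd (k - (i + c)) - (j - (i + d))" using kc jd by (rule dvd_diff)
      then show False using \<open>k = j\<close> zdvd_eq_0_if_less[of L "d - c"] X_range[OF c(1)] d by auto
    qed
    moreover have "bridge vs es i j k e" using bridge_cong_mod[OF kc] \<beta>[OF c(1)] c by blast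
    ultimately show "e \<in> bridges vs es i j" unfolding bridges_def using k by blast
  qed
  moreover have "finite (bridges vs es i j)"
    by (rule finite_subset[of _ "set es"]) (auto simp: bridges_def bridge_def intro: ce_in_set)
  ultimately show ?thesis using card_inj_on_le by blast
qed

definition third_vertex :: "'a set \<Rightarrow> int \<Rightarrow> bool" where
  "third_vertex e y \<longleftrightarrow> cv vs y \<in> e \<and> (\<forall>q. e = ce es q \<longrightarrow> cv vs y \<notin> {cv vs q, cv vs (q + 1)})"

lemma third_vertex_unique:
  assumes "e \<in> set es" "third_vertex e y" "third_vertex e y'" "y \<in> {0..<L}" "y' \<in> {0..<L}"
  shows "y = y'"
proof -
  obtain t where t: "t < length es" "es ! t = e" using assms(1) by (auto simp: in_set_conv_nth)
  have "e = ce es (int t)" unfolding ce_def using t by simp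
  then have "cv vs y = cv vs y'"
    using ce_Diff_ends_unique[of "cv vs y" "int t" "cv vs y'"] assms(2,3)
      unfolding third_vertex_def by auto
  then show ?thesis using cv_shift_inj[of y y' 0] assms(4,5) by simp
qed

lemma card_shift_in_ce_le_1:
  assumes "finite C" "inj_on h C" "0 \<le> p" "p < L"
    and h: "\<And>c. c \<in> C \<Longrightarrow> 0 \<le> h c \<and> h c < L \<and> h c \<noteq> p \<and> h c \<noteq> next_pos p"
  shows "card {c \<in> C. cv vs (a + h c) \<in> ce es (a + p)} \<le> 1"
proof -
  have "c = c'" if "c \<in> C" "c' \<in> C"
    "cv vs (a + h c) \<in> ce es (a + p)" "cv vs (a + h c') \<in> ce es (a + p)" for c c'
  proof (rule ccontr)
    assume "c \<noteq> c'"
    then have "h c \<noteq> h c'" using assms(2) that(1,2) by (auto dest: inj_onD)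
    moreover have "cv vs (a + p) \<in> ce es (a + p)" "cv vs (a + next_pos p) \<in> ce es (a + p)"
      using cv_next_pos_in_ce[OF assms(3,4)] by auto
    ultimately show False
      using no_four_shifted_in_edge[OF ce_in_E that(3,4)] h[OF that(1)] h[OF that(2)]
        next_pos_range[OF assms(3,4)] assms(3,4) by blast
  qed
  then show ?thesis using assms(1) by (auto simp: card_le_Suc0_iff_eq)
qed

definition crossings :: "int \<Rightarrow> int \<Rightarrow> int \<Rightarrow> int set" where
  "crossings i j d = {c \<in> {1..d - 2} \<union> {d + 1..L - 2}.
     cv vs (i + partner_i d c) \<in> nbhd V E (cv vs i) \<and>
     cv vs (i + partner_j d c) \<in> nbhd V E (cv vs j) \<and>
     cv vs (i + partner_i d c) \<notin> ce es i \<and> cv vs (i + partner_j d c) \<notin> ce es j}"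

lemma card_partners_in_ce_le_1:
  assumes d: "2 \<le> d" "d \<le> L - 2"
  shows "card {c \<in> {1..d - 2} \<union> {d + 1..L - 2}. cv vs (i + partner_i d c) \<in> ce es (i + 0)} \<le> 1"
    "card {c \<in> {1..d - 2} \<union> {d + 1..L - 2}. cv vs (i + partner_j d c) \<in> ce es (i + d)} \<le> 1"
proof -
  have "next_pos 0 = 1" "next_pos d = d + 1" unfolding next_pos_def using length_vs_ge_2 d by auto
  show "card {c \<in> {1..d - 2} \<union> {d + 1..L - 2}. cv vs (i + partner_i d c) \<in> ce es (i + 0)} \<le> 1"
  proof (rule card_shift_in_ce_le_1[OF _ inj_on_partners(1)])
    show "0 \<le> partner_i d c \<and> partner_i d c < L \<and> partner_i d c \<noteq> 0 \<and> partner_i d c \<noteq> next_pos 0"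
      if "c \<in> {1..d - 2} \<union> {d + 1..L - 2}" for c
      using partner_ranges(1)[OF that d] \<open>next_pos 0 = 1\<close> by simp
  qed (use L_pos in simp_all)
  show "card {c \<in> {1..d - 2} \<union> {d + 1..L - 2}. cv vs (i + partner_j d c) \<in> ce es (i + d)} \<le> 1"
  proof (rule card_shift_in_ce_le_1[OF _ inj_on_partners(2)])
    show "0 \<le> partner_j d c \<and> partner_j d c < L \<and> partner_j d c \<noteq> d \<and> partner_j d c \<noteq> next_pos d"
      if "c \<in> {1..d - 2} \<union> {d + 1..L - 2}" for c
      using partner_ranges(2)[OF that d] \<open>next_pos d = d + 1\<close> by simp
  qed (use d in simp_all)
qed

(* Every cycle neighbour of v_i except v_{i+1}, v_j, v_{i-1} is v_{i + partner_i d c} for an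
   admissible position c, and likewise for v_j; both use the same L - 4 admissible positions. *)
lemma card_crossings_ge:
  assumes d: "d = (j - i) mod L" "2 \<le> d" "d \<le> L - 2"
  shows "int (degC V E vs (cv vs i)) + int (degC V E vs (cv vs j)) \<le>
    int (card (crossings i j d)) + L + 4"
proof -
  have "L dvd (j - (i + d))" using zdvd_diff_add_mod d(1) by simp
  then have vj: "cv vs j = cv vs (i + d)" and ej: "ce es j = ce es (i + d)"
    unfolding cv_eq_iff ce_eq_iff by simp_all
  define D where "D = {1..d - 2} \<union> {d + 1..L - 2}"
  define Ni where "Ni = {c \<in> {0..<L}. cv vs (i + c) \<in> nbhd V E (cv vs i)}"
  define Nj where "Nj = {c \<in> {0..<L}. cv vs (i + c) \<in> nbhd V E (cv vs j)}"
  define A where "A = {c \<in> D. partner_i d c \<in> Ni}"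
  define B where "B = {c \<in> D. partner_j d c \<in> Nj}"
  define Ei where "Ei = {c \<in> D. cv vs (i + partner_i d c) \<in> ce es (i + 0)}"
  define Ej where "Ej = {c \<in> D. cv vs (i + partner_j d c) \<in> ce es (i + d)}"
  have "card D = card {1..d - 2} + card {d + 1..L - 2}"
    unfolding D_def by (rule card_Un_disjoint) auto
  then have card_D: "int (card D) = L - 4" using d by simp
  have "Ni \<subseteq> {1..<L}"
  proof
    fix x assume "x \<in> Ni"
    then have "0 \<le> x" "x < L" "cv vs (i + x) \<noteq> cv vs (i + 0)" unfolding Ni_def nbhd_def by auto
    then show "x \<in> {1..<L}" by (cases "x = 0") auto
  qed
  moreover have "Nj \<subseteq> {0..<L} - {d}" unfolding Nj_def nbhd_def using vj by auto
  ultimately have "card Ni \<le> card A + 3" "card Nj \<le> card B + 3"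
    unfolding A_def B_def D_def using card_le_card_partner_i card_le_card_partner_j d by blast+
  moreover have "card Ni = degC V E vs (cv vs i)" "card Nj = degC V E vs (cv vs j)"
    unfolding Ni_def Nj_def degC_def by (rule card_shift_preimage)+
  moreover have "card A + card B \<le> card (A \<inter> B - Ei - Ej) + card D + 2"
    using card_partners_in_ce_le_1[OF d(2,3), of i]
    by (intro card_Int_Diff_ge) (auto simp: A_def B_def Ei_def Ej_def D_def)
  moreover have "A \<inter> B - Ei - Ej = crossings i j d"
  proof (rule set_eqI)
    fix c
    have "c \<in> crossings i j d \<longleftrightarrow> c \<in> D \<and> cv vs (i + partner_i d c) \<in> nbhd V E (cv vs i) \<and>
        cv vs (i + partner_j d c) \<in> nbhd V E (cv vs j) \<and> cv vs (i + partner_i d c) \<notin> ce es (i + 0) \<and>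
        cv vs (i + partner_j d c) \<notin> ce es (i + d)"
      unfolding crossings_def D_def ej by simp
    moreover have "c \<in> D \<Longrightarrow> partner_i d c \<in> {0..<L} \<and> partner_j d c \<in> {0..<L}"
      using partner_ranges d unfolding D_def by fastforce
    ultimately show "c \<in> A \<inter> B - Ei - Ej \<longleftrightarrow> c \<in> crossings i j d"
      unfolding A_def B_def Ei_def Ej_def Ni_def Nj_def by blast
  qed
  ultimately show ?thesis using card_D by simp
qed

end

section \<open>Usable sets\<close>

locale usable_set = max_cycle +
  fixes u :: 'a and U :: "'a set"
  assumes u_notin: "u \<notin> set vs" and usable: "usable E vs es u U"
begin

lemma usable_subset: "U \<subseteq> set vs"
  using usable unfolding usable_def by blast

lemma usable_gap:
  assumes ab: "a \<in> {0..<L}" "b \<in> {0..<L}" "a \<noteq> b" "cv vs a \<in> U" "cv vs b \<in> U"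
  shows "2 \<le> (b - a) mod L \<and> (b - a) mod L \<le> L - 2"
proof -
  define d where "d = (b - a) mod L"
  have bd: "L dvd (b - (a + d))" using zdvd_diff_add_mod unfolding d_def by simp
  have nc: "b \<noteq> (a + 1) mod L" "a \<noteq> (b + 1) mod L" using usable ab unfolding usable_def by blast+
  have "d \<noteq> 0"
  proof
    assume "d = 0"
    then show False using bd zdvd_eq_0_if_less[of L "b - a"] ab by auto
  qed
  moreover have "d \<noteq> 1"
  proof
    assume "d = 1"
    then have "b mod L = (a + 1) mod L" using bd by (simp add: mod_eq_dvd_iff)
    then show False using nc ab by simp
  qed
  moreover have "d \<noteq> L - 1"
  proof
    assume "d = L - 1"
    have "L dvd (b - (a + d)) + L" using bd by simp
    moreover have "(b - (a + d)) + L = b + 1 - a" using \<open>d = L - 1\<close> by simp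
    ultimately have "L dvd b + 1 - a" by simp
    then have "a mod L = (b + 1) mod L" by (simp add: mod_eq_dvd_iff dvd_diff_commute)
    then show False using nc ab by simp
  qed
  moreover have "0 \<le> d" "d < L" unfolding d_def using L_pos by auto
  ultimately show ?thesis unfolding d_def[symmetric] by auto
qed

lemma usable_edges:
  assumes ab: "a \<in> {0..<L}" "b \<in> {0..<L}" "a \<noteq> b" "cv vs a \<in> U" "cv vs b \<in> U"
    and d: "d = (b - a) mod L"
  shows "\<exists>f g. f \<in> E \<and> g \<in> E \<and> u \<in> f \<and> cv vs (a + (L - 1)) \<in> f \<and> u \<in> g \<and> cv vs (a + (d - 1)) \<in> g \<and>
    f \<noteq> g \<and> f \<noteq> ce es (a + (L - 2)) \<and> g \<noteq> ce es (a + (d - 2))"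
proof -
  have bd: "L dvd (b - (a + d))" using zdvd_diff_add_mod d by simp
  obtain f g where fg: "f \<in> edges_with E u (cv vs (a - 1)) - {ce es (a - 2)}"
      "g \<in> edges_with E u (cv vs (b - 1)) - {ce es (b - 2)}" "f \<noteq> g"
    using usable ab unfolding usable_def by blast
  have "cv vs (a - 1) = cv vs (a + (L - 1))" "ce es (a - 2) = ce es (a + (L - 2))"
    unfolding cv_eq_iff ce_eq_iff by simp_all
  moreover have "cv vs (b - 1) = cv vs (a + (d - 1))" "ce es (b - 2) = ce es (a + (d - 2))"
    unfolding cv_eq_iff ce_eq_iff using bd by (simp_all add: algebra_simps)
  ultimately show ?thesis using fg unfolding edges_with_def by auto
qed

lemma bridge_after_gap:
  assumes ab: "a \<in> {0..<L}" "b \<in> {0..<L}" "a \<noteq> b" "cv vs a \<in> U" "cv vs b \<in> U"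
    and d: "d = (b - a) mod L" and c: "d + 1 \<le> c" "c \<le> L - 2"
    and adj: "cv vs (a + c) \<in> nbhd V E (cv vs a)" "cv vs (a + (c + 1)) \<in> nbhd V E (cv vs b)"
    and not_in: "cv vs (a + c) \<notin> ce es a" "cv vs (a + (c + 1)) \<notin> ce es b"
  shows "\<exists>e. bridge vs es a b (a + c) e"
proof -
  have gap: "2 \<le> d" "d \<le> L - 2" using usable_gap[OF ab] d by auto
  have bd: "L dvd (b - (a + d))" using zdvd_diff_add_mod d by simp
  then have vb: "cv vs b = cv vs (a + d)" and eb: "ce es b = ce es (a + d)"
    unfolding cv_eq_iff ce_eq_iff by simp_all
  obtain f g where fg: "f \<in> E" "g \<in> E" "u \<in> f" "cv vs (a + (L - 1)) \<in> f" "u \<in> g"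
    "cv vs (a + (d - 1)) \<in> g" "f \<noteq> g" "f \<noteq> ce es (a + (L - 2))" "g \<noteq> ce es (a + (d - 2))"
    using usable_edges[OF ab d] by blast
  obtain h1 h2 where h: "h1 \<in> E" "cv vs a \<in> h1" "cv vs (a + c) \<in> h1"
    "h2 \<in> E" "cv vs (a + d) \<in> h2" "cv vs (a + (c + 1)) \<in> h2"
    using nbhd_imp_edge[OF adj(1)] nbhd_imp_edge[OF adj(2)[unfolded vb]] by blast
  have "ce es (a + (c - 1)) = {cv vs a, cv vs (a + c), cv vs (a + (c - 1))} \<or>
      ce es (a + (c + 1)) = {cv vs (a + d), cv vs (a + (c + 1)), cv vs (a + (c + 2))}"
    by (rule crossing_chords_force_triple_edge[OF u_notin gap(1) c(1,2) fg(1,2) h(1,4) fg(3-6)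
        h(2,3,5,6) fg(7-9) not_in(1) not_in(2)[unfolded eb]])
  moreover have "a + (c - 1) = a + c - 1" "a + (c + 1) = a + c + 1" "a + (c + 2) = a + c + 2"
    by simp_all
  ultimately have "ce es (a + c - 1) = {cv vs a, cv vs (a + c), cv vs (a + c - 1)} \<or>
      ce es (a + c + 1) = {cv vs b, cv vs (a + c + 1), cv vs (a + c + 2)}"
    unfolding vb by (simp only:)
  moreover have seg: "on_seg L b (a + c) a" using on_seg_shift_iff(2)[OF d gap] gap c by auto
  ultimately show ?thesis
  proof (elim disjE)
    assume "ce es (a + c - 1) = {cv vs a, cv vs (a + c), cv vs (a + c - 1)}"
    then have "bridge vs es a b (a + c) (ce es (a + c - 1))"
      unfolding bridge_def by (intro disjI2 conjI[OF seg] disjI1 conjI[OF refl])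
    then show ?thesis ..
  next
    assume "ce es (a + c + 1) = {cv vs b, cv vs (a + c + 1), cv vs (a + c + 2)}"
    then have "bridge vs es a b (a + c) (ce es (a + c + 1))"
      unfolding bridge_def by (intro disjI2 conjI[OF seg] disjI2 conjI[OF refl])
    then show ?thesis ..
  qed
qed

lemma bridge_before_gap:
  assumes ab: "a \<in> {0..<L}" "b \<in> {0..<L}" "a \<noteq> b" "cv vs a \<in> U" "cv vs b \<in> U"
    and d: "d = (b - a) mod L" and c: "1 \<le> c" "c \<le> d - 2"
    and adj: "cv vs (a + (c + 1)) \<in> nbhd V E (cv vs a)" "cv vs (a + c) \<in> nbhd V E (cv vs b)"
    and not_in: "cv vs (a + (c + 1)) \<notin> ce es a" "cv vs (a + c) \<notin> ce es b"
  shows "\<exists>e. bridge vs es a b (a + c) e"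
proof -
  have gap: "2 \<le> d" "d \<le> L - 2" using usable_gap[OF ab] d by auto
  have bd: "L dvd (b - (a + d)) + L" using zdvd_diff_add_mod d by simp
  have "(b + (c - d + L)) - (a + c) = (b - (a + d)) + L" by simp
  then have shift: "L dvd (b + (c - d + L)) - (a + c)" using bd by (simp only:)
  have "a - b - (L - d) = - ((b - (a + d)) + L)" by simp
  then have "L dvd a - b - (L - d)" using bd by (metis dvd_minus_iff)
  then have "(a - b) mod L = L - d" using mod_eq_if_dvd_diff[of "L - d" L "a - b"] gap by simp
  moreover have "cv vs (b + (c - d + L)) = cv vs (a + c)"
    "cv vs (b + (c - d + L + 1)) = cv vs (a + (c + 1))"
    using shift unfolding cv_eq_iff by (simp_all add: algebra_simps)
  ultimately obtain e where "bridge vs es b a (b + (c - d + L)) e"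
    using bridge_after_gap[OF ab(2,1) ab(3)[symmetric] ab(5,4), of "L - d" "c - d + L"]
      adj not_in c gap by (simp add: add.assoc) blast
  then show ?thesis using bridge_swap bridge_cong_mod[OF shift] by blast
qed

lemma crossing_has_bridge:
  assumes ij: "i \<in> {0..<L}" "j \<in> {0..<L}" "i \<noteq> j" "cv vs i \<in> U" "cv vs j \<in> U"
    and d: "d = (j - i) mod L" and c: "c \<in> crossings i j d"
  shows "\<exists>e. bridge vs es i j (i + c) e"
proof -
  have c_range: "c \<in> {1..d - 2} \<union> {d + 1..L - 2}"
    and adj: "cv vs (i + partner_i d c) \<in> nbhd V E (cv vs i)"
      "cv vs (i + partner_j d c) \<in> nbhd V E (cv vs j)"
    and not_in: "cv vs (i + partner_i d c) \<notin> ce es i" "cv vs (i + partner_j d c) \<notin> ce es j"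
    using c unfolding crossings_def by blast+
  show ?thesis
  proof (cases "c \<le> d - 2")
    case True
    then have "partner_i d c = c + 1" "partner_j d c = c"
      unfolding partner_i_def partner_j_def by simp_all
    then show ?thesis using bridge_before_gap[OF ij d] c_range True adj not_in by simp
  next
    case False
    then have "partner_i d c = c" "partner_j d c = c + 1"
      unfolding partner_i_def partner_j_def by simp_all
    then show ?thesis using bridge_after_gap[OF ij d] c_range False adj not_in by simp
  qed
qed

lemma card_bridges_ge:
  assumes ij: "i \<in> {0..<L}" "j \<in> {0..<L}" "i \<noteq> j" "cv vs i \<in> U" "cv vs j \<in> U"
  shows "int (degC V E vs (cv vs i)) + int (degC V E vs (cv vs j)) - L - 4 \<le>
    int (card (bridges vs es i j))"
proof -
  define d where "d = (j - i) mod L"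
  have gap: "2 \<le> d" "d \<le> L - 2" using usable_gap[OF ij] unfolding d_def by auto
  have "card (crossings i j d) \<le> card (bridges vs es i j)"
  proof (rule card_le_card_bridges[OF d_def gap])
    show "crossings i j d \<subseteq> {1..d - 2} \<union> {d + 1..L - 2}" unfolding crossings_def by blast
  qed (rule crossing_has_bridge[OF ij d_def])
  then show ?thesis using card_crossings_ge[OF d_def gap] by linarith
qed

lemma bridge_third_vertex:
  assumes ab: "a \<in> {0..<L}" "b \<in> {0..<L}" "a \<noteq> b" "cv vs a \<in> U" "cv vs b \<in> U"
    and e: "e \<in> bridges vs es a b"
  shows "third_vertex e a \<or> third_vertex e b"
proof -
  define d where "d = (b - a) mod L"
  have gap: "2 \<le> d" "d \<le> L - 2" using usable_gap[OF ab] unfolding d_def by auto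
  have bd: "L dvd (b - (a + d))" using zdvd_diff_add_mod unfolding d_def by simp
  obtain k where k: "k \<in> {0..<L}" "k \<noteq> a" "k \<noteq> b" "bridge vs es a b k e"
    using e unfolding bridges_def by blast
  define c where "c = (k - a) mod L"
  have kc: "L dvd (k - (a + c))" using zdvd_diff_add_mod unfolding c_def by simp
  have "c \<noteq> 0" using kc zdvd_eq_0_if_less[of L "k - a"] k ab by auto
  moreover have "c \<noteq> d"
  proof
    assume "c = d"
    have "L dvd (k - (a + c)) - (b - (a + d))" using kc bd by (rule dvd_diff)
    then show False using \<open>c = d\<close> zdvd_eq_0_if_less[of L "k - b"] k ab by auto
  qed
  moreover have "0 \<le> c" "c < L" unfolding c_def using L_pos by auto
  ultimately have c: "1 \<le> c" "c \<le> L - 1" "c \<noteq> d" by auto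
  have "bridge vs es a b (a + c) e" using bridge_cong_mod[OF kc] k by blast
  then obtain p x where P: "0 \<le> p" "p < L" "e = ce es (a + p)" "cv vs (a + x) \<in> e" "x = 0 \<or> x = d"
    "x \<noteq> p" "x \<noteq> next_pos p"
    using bridge_edge_form[OF d_def gap c] by blast
  have "cv vs (a + x) \<notin> {cv vs q, cv vs (q + 1)}" if "e = ce es q" for q
  proof -
    have "L dvd (q - (a + p))" using that P(3) ce_eq_iff by (simp add: dvd_diff_commute)
    then have "cv vs q = cv vs (a + p)" "cv vs (q + 1) = cv vs (a + p + 1)"
      unfolding cv_eq_iff by (simp_all add: algebra_simps)
    then have "cv vs q = cv vs (a + p)" "cv vs (q + 1) = cv vs (a + next_pos p)"
      using cv_next_pos by simp_all
    then show ?thesis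
      using cv_shift_ne[of x p a] cv_shift_ne[of x "next_pos p" a] next_pos_range[OF P(1,2)]
        P gap by auto
  qed
  then have third: "third_vertex e (a + x)" using P(4) unfolding third_vertex_def by blast
  have "cv vs (a + d) = cv vs b" "cv vs (a + 0) = cv vs a"
    unfolding cv_eq_iff using bd by (simp_all add: dvd_diff_commute)
  then have "third_vertex e (a + x) \<longleftrightarrow> (if x = 0 then third_vertex e a else third_vertex e b)"
    using P(5) unfolding third_vertex_def by auto
  then show ?thesis using third by presburger
qed

lemma card_pairs_bridged_le:
  assumes K: "K \<subseteq> {0..<L}" "\<And>x. x \<in> K \<Longrightarrow> cv vs x \<in> U" and e: "e \<in> set es"
  shows "card {p \<in> K \<times> K - Id. e \<in> bridges vs es (fst p) (snd p)} \<le> 2 * (card K - 1)"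
proof (cases "\<exists>y\<in>K. third_vertex e y")
  case False
  have "\<not> (p \<in> K \<times> K - Id \<and> e \<in> bridges vs es (fst p) (snd p))" for p
  proof
    assume p: "p \<in> K \<times> K - Id \<and> e \<in> bridges vs es (fst p) (snd p)"
    then have "fst p \<in> K" "snd p \<in> K" "fst p \<noteq> snd p" by auto
    then show False using bridge_third_vertex[of "fst p" "snd p" e] K p False by blast
  qed
  then have "{p \<in> K \<times> K - Id. e \<in> bridges vs es (fst p) (snd p)} = {}" by blast
  then show ?thesis by (metis card.empty le0)
next
  case True
  then obtain y where y: "y \<in> K" "third_vertex e y" by blast
  have finK: "finite K" using K(1) finite_subset by blast
  have "{p \<in> K \<times> K - Id. e \<in> bridges vs es (fst p) (snd p)} \<subseteq> ({y} \<times> (K - {y})) \<union> ((K - {y}) \<times> {y})"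
  proof
    fix p assume p: "p \<in> {p \<in> K \<times> K - Id. e \<in> bridges vs es (fst p) (snd p)}"
    obtain x z where xz: "p = (x, z)" by (cases p)
    then have "x \<in> K" "z \<in> K" "x \<noteq> z" "e \<in> bridges vs es x z" using p by auto
    then have "third_vertex e x \<or> third_vertex e z"
      using bridge_third_vertex[of x z e] K(2) subsetD[OF K(1)] by simp
    then have "x = y \<or> z = y" using third_vertex_unique[OF e] y K \<open>x \<in> K\<close> \<open>z \<in> K\<close> by blast
    then show "p \<in> {y} \<times> (K - {y}) \<union> (K - {y}) \<times> {y}"
      using \<open>x \<in> K\<close> \<open>z \<in> K\<close> \<open>x \<noteq> z\<close> xz by auto
  qed
  then have "card {p \<in> K \<times> K - Id. e \<in> bridges vs es (fst p) (snd p)}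
      \<le> card ({y} \<times> (K - {y}) \<union> (K - {y}) \<times> {y})"
    using finK by (intro card_mono) auto
  also have "\<dots> \<le> card ({y} \<times> (K - {y})) + card ((K - {y}) \<times> {y})" by (rule card_Un_le)
  also have "\<dots> = 2 * (card K - 1)" using y finK by (simp add: card_cartesian_product)
  finally show ?thesis .
qed

lemma sum_card_bridges_le:
  assumes K: "K \<subseteq> {0..<L}" "\<And>x. x \<in> K \<Longrightarrow> cv vs x \<in> U"
  shows "(\<Sum>p\<in>K \<times> K - Id. card (bridges vs es (fst p) (snd p))) \<le> 2 * (card K - 1) * length vs"
proof -
  have "finite K" using K(1) finite_subset by blast
  moreover have "bridges vs es x y \<subseteq> set es" for x y
    unfolding bridges_def bridge_def using ce_in_set by auto
  ultimately have "(\<Sum>p\<in>K \<times> K - Id. card (bridges vs es (fst p) (snd p))) =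
      (\<Sum>e\<in>set es. card {p \<in> K \<times> K - Id. e \<in> bridges vs es (fst p) (snd p)})"
    by (intro sum_card_swap) auto
  also have "\<dots> \<le> (\<Sum>e\<in>set es. 2 * (card K - 1))"
    by (rule sum_mono) (rule card_pairs_bridged_le[OF K])
  also have "\<dots> = 2 * (card K - 1) * length vs" using card_set_vs length_es distinct_es
    by (simp add: distinct_card)
  finally show ?thesis .
qed

lemma card_mult_le_double_length:
  assumes K: "K \<subseteq> {0..<L}" "\<And>x. x \<in> K \<Longrightarrow> cv vs x \<in> U" "2 \<le> card K"
    and bound: "\<And>x y. x \<in> K \<Longrightarrow> y \<in> K \<Longrightarrow> x \<noteq> y \<Longrightarrow> \<beta> \<le> real (card (bridges vs es x y))"
  shows "real (card K) * \<beta> \<le> 2 * real (length vs)"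
proof -
  have "finite K" using K(1) finite_subset by blast
  then have "real (card K - 1) * (real (card K) * \<beta>) = real (card (K \<times> K - Id)) * \<beta>"
    by (simp add: card_off_diag)
  also have "\<dots> \<le> (\<Sum>p\<in>K \<times> K - Id. real (card (bridges vs es (fst p) (snd p))))"
    using sum_bounded_below[of "K \<times> K - Id" \<beta> "\<lambda>p. real (card (bridges vs es (fst p) (snd p)))"]
      bound by auto
  also have "\<dots> = real (\<Sum>p\<in>K \<times> K - Id. card (bridges vs es (fst p) (snd p)))" by simp
  also have "\<dots> \<le> real (2 * (card K - 1) * length vs)"
    using sum_card_bridges_le[OF K(1,2)] by (simp only: of_nat_le_iff)
  also have "\<dots> = real (card K - 1) * (2 * real (length vs))" by simp
  finally show ?thesis using K(3) by (simp add: mult_le_cancel_left_pos)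
qed

lemma adjacent_usable_in_ce:
  assumes ij: "i \<in> {0..<L}" "j \<in> {0..<L}" "i \<noteq> j" "cv vs i \<in> U" "cv vs j \<in> U"
    and h: "h \<in> E" "cv vs i \<in> h" "cv vs j \<in> h"
  shows "cv vs j \<in> ce es i \<or> cv vs i \<in> ce es j"
proof -
  define d where "d = (j - i) mod L"
  have gap: "2 \<le> d" "d \<le> L - 2" using usable_gap[OF ij] unfolding d_def by auto
  have "L dvd (j - (i + d))" using zdvd_diff_add_mod unfolding d_def by simp
  then have vj: "cv vs j = cv vs (i + d)" and ej: "ce es j = ce es (i + d)"
    unfolding cv_eq_iff ce_eq_iff by simp_all
  obtain f g where "f \<in> E" "g \<in> E" "u \<in> f" "cv vs (i + (L - 1)) \<in> f" "u \<in> g"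
    "cv vs (i + (d - 1)) \<in> g" "f \<noteq> g" "f \<noteq> ce es (i + (L - 2))" "g \<noteq> ce es (i + (d - 2))"
    using usable_edges[OF ij d_def] by blast
  then show ?thesis using chord_forces_cycle_edge[OF u_notin gap _ _ h(1)] h(2,3) vj ej by simp
qed

lemma usable_in_ce_unique:
  assumes "a \<in> {0..<L}" "b \<in> {0..<L}" "c \<in> {0..<L}" "a \<noteq> b" "a \<noteq> c"
    "cv vs a \<in> U" "cv vs b \<in> U" "cv vs c \<in> U" "cv vs b \<in> ce es a" "cv vs c \<in> ce es a"
  shows "b = c"
proof -
  have "b \<noteq> (a + 1) mod L" "c \<noteq> (a + 1) mod L" using usable assms unfolding usable_def by blast+
  then have "cv vs b \<noteq> cv vs (a + 1)" "cv vs c \<noteq> cv vs (a + 1)"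
    using assms(2,3) unfolding cv_eq_iff by (auto simp: mod_eq_dvd_iff[symmetric] dvd_diff_commute)
  moreover have "cv vs b \<noteq> cv vs a" "cv vs c \<noteq> cv vs a" using cv_shift_inj[of _ _ 0] assms by force+
  ultimately have "cv vs b = cv vs c"
    using ce_Diff_ends_unique[of "cv vs b" a "cv vs c"] assms(9,10) by blast
  then show ?thesis using cv_shift_inj[of b c 0] assms(2,3) by simp
qed

lemma card_pairwise_adjacent_usable_le_3:
  assumes K: "K \<subseteq> {0..<L}" "\<And>x. x \<in> K \<Longrightarrow> cv vs x \<in> U"
    and adj: "\<And>x y. x \<in> K \<Longrightarrow> y \<in> K \<Longrightarrow> x \<noteq> y \<Longrightarrow> \<exists>h\<in>E. cv vs x \<in> h \<and> cv vs y \<in> h"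
  shows "card K \<le> 3"
proof -
  have finK: "finite K" using K(1) finite_subset by blast
  define Q where "Q = {(x, y) \<in> K \<times> K - Id. cv vs y \<in> ce es x}"
  have "Q \<subseteq> K \<times> K" unfolding Q_def by auto
  then have finQ: "finite Q" using finK finite_subset by blast
  have "K \<times> K - Id \<subseteq> Q \<union> prod.swap ` Q"
  proof
    fix p assume p: "p \<in> K \<times> K - Id"
    obtain x y where xy: "p = (x, y)" by (cases p)
    then have xyK: "x \<in> K" "y \<in> K" "x \<noteq> y" using p by auto
    then obtain h where "h \<in> E" "cv vs x \<in> h" "cv vs y \<in> h" using adj by blast
    then have "cv vs y \<in> ce es x \<or> cv vs x \<in> ce es y"
      using adjacent_usable_in_ce[of x y h] xyK K by blast
    then show "p \<in> Q \<union> prod.swap ` Q"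
    proof
      assume "cv vs y \<in> ce es x"
      then show ?thesis using p xy unfolding Q_def by auto
    next
      assume "cv vs x \<in> ce es y"
      then have "(y, x) \<in> Q" using xyK unfolding Q_def by auto
      then show ?thesis using xy by (metis UnI2 image_eqI swap_simp)
    qed
  qed
  then have "card (K \<times> K - Id) \<le> card Q + card (prod.swap ` Q)"
    by (meson card_Un_le card_mono finQ finite_UnI finite_imageI order_trans)
  also have "\<dots> \<le> 2 * card Q" using card_image_le[OF finQ, of prod.swap] by simp
  also have "card Q \<le> card K"
  proof (rule card_inj_on_le[of fst])
    show "inj_on fst Q"
    proof (rule inj_onI)
      fix p p' assume pp: "p \<in> Q" "p' \<in> Q" "fst p = fst p'"
      obtain x y z where xyz: "p = (x, y)" "p' = (x, z)" using pp(3) by (metis prod.collapse)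
      then have "x \<in> K" "y \<in> K" "z \<in> K" "x \<noteq> y" "x \<noteq> z" "cv vs y \<in> ce es x" "cv vs z \<in> ce es x"
        using pp(1,2) unfolding Q_def by auto
      then show "p = p'" using usable_in_ce_unique[of x y z] K(2) subsetD[OF K(1)] xyz by blast
    qed
  qed (use finK in \<open>auto simp: Q_def\<close>)
  finally have "card (K \<times> K - Id) \<le> 2 * card K" by simp
  moreover have "card (K \<times> K - Id) = card K * card K - card K"
    using card_off_diag[OF finK] by (simp add: diff_mult_distrib)
  ultimately have "card K * card K \<le> 3 * card K" by linarith
  then show ?thesis by (cases "card K = 0") auto
qed

lemma card_usable_indices: "card {x \<in> {0..<L}. cv vs x \<in> U \<inter> S} = card (U \<inter> S)"
proof -
  have "U \<inter> S \<inter> set vs = U \<inter> S" using usable_subset by auto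
  then show ?thesis using card_shift_preimage[of 0 "U \<inter> S"] by simp
qed

lemma card_bridges_ge_min_degC:
  assumes ij: "i \<in> {0..<L}" "j \<in> {0..<L}" "i \<noteq> j" "cv vs i \<in> U" "cv vs j \<in> U"
    and deg: "\<delta> \<le> real (degC V E vs (cv vs i))" "\<delta> \<le> real (degC V E vs (cv vs j))"
  shows "2 * \<delta> - real (length vs) - 4 \<le> real (card (bridges vs es i j))"
proof -
  have "real_of_int (int (degC V E vs (cv vs i)) + int (degC V E vs (cv vs j)) - L - 4)
      \<le> real_of_int (int (card (bridges vs es i j)))"
    using card_bridges_ge[OF ij] by (simp only: of_int_le_iff)
  then show ?thesis using deg by simp
qed

lemma card_usable_classS_le_3:
  assumes ore: "\<And>x y. x \<in> V \<Longrightarrow> y \<in> V \<Longrightarrow> x \<noteq> y \<Longrightarrow> \<not> adjacent E x y \<Longrightarrow>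
      real (deg V E x + deg V E y) \<ge> real n + d0"
    and n: "card V = n" "n \<le> length vs + 3"
  shows "card (U \<inter> classS V E vs n d0) \<le> 3"
proof -
  define K where "K = {x \<in> {0..<L}. cv vs x \<in> U \<inter> classS V E vs n d0}"
  have "card K \<le> 3"
  proof (rule card_pairwise_adjacent_usable_le_3)
    fix x y assume xy: "x \<in> K" "y \<in> K" "x \<noteq> y"
    have small: "cv vs x \<in> V" "real (degC V E vs (cv vs x)) < (real n + d0) / 2 - 3"
      "cv vs y \<in> V" "real (degC V E vs (cv vs y)) < (real n + d0) / 2 - 3"
      using xy unfolding K_def classS_def by auto
    have "deg V E v \<le> degC V E vs v + 3" for v using deg_le_degC_add[of v] n by linarith
    then have "real (deg V E v) \<le> real (degC V E vs v) + 3" for v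
      by (metis of_nat_add of_nat_le_iff of_nat_numeral)
    moreover have "real (degC V E vs (cv vs x)) + real (degC V E vs (cv vs y)) < real n + d0 - 6"
      using small(2,4) by (simp add: field_simps)
    ultimately have sum_less: "real (deg V E (cv vs x) + deg V E (cv vs y)) < real n + d0"
      unfolding of_nat_add by (smt (verit))
    have "cv vs x \<noteq> cv vs y" using cv_shift_inj[of x y 0] xy unfolding K_def by auto
    have "adjacent E (cv vs x) (cv vs y)"
    proof (rule ccontr)
      assume "\<not> adjacent E (cv vs x) (cv vs y)"
      then show False using ore[OF small(1,3) \<open>cv vs x \<noteq> cv vs y\<close>] sum_less by linarith
    qed
    then show "\<exists>h\<in>E. cv vs x \<in> h \<and> cv vs y \<in> h" unfolding adjacent_def edges_with_def by blast
  qed (auto simp: K_def)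
  then show ?thesis using card_usable_indices unfolding K_def by simp
qed

lemma card_usable_le_card_classB_add_3:
  assumes "card (U \<inter> classS V E vs n d0) \<le> 3"
  shows "card U \<le> card (U \<inter> classB V E vs n d0) + 3"
proof -
  have fin: "finite U" using usable_subset finite_subset by blast
  have "U = (U \<inter> classS V E vs n d0) \<union> (U \<inter> classB V E vs n d0)"
    using usable_subset set_vs_subset_V unfolding classS_def classB_def by auto
  moreover have "(U \<inter> classS V E vs n d0) \<inter> (U \<inter> classB V E vs n d0) = {}"
    unfolding classS_def classB_def by auto
  ultimately have "card U = card (U \<inter> classS V E vs n d0) + card (U \<inter> classB V E vs n d0)"
    using fin by (metis card_Un_disjoint finite_Int)
  then show ?thesis using assms by linarith
qed

(* If d_C(u) \<ge> n/4 + 18, then |U \<inter> B| \<ge> n/24 and any two vertices of U \<inter> B have at least 56 bridges,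
   which is too many for the L cycle edges. *)
lemma outside_in_classS':
  assumes n: "69 \<le> n" "length vs + 1 \<le> n" and u: "u \<in> V"
    and U: "real (degC V E vs u) / 6 \<le> real (card U)"
    and B: "card U \<le> card (U \<inter> classB V E vs n 65) + 3"
  shows "u \<in> classS' V E vs n 18"
proof (rule ccontr)
  assume "u \<notin> classS' V E vs n 18"
  have n': "69 \<le> real n" "real (length vs) + 1 \<le> real n" using n by simp_all
  from \<open>u \<notin> _\<close> have "real n / 4 + 18 \<le> real (degC V E vs u)" using u unfolding classS'_def by auto
  define K where "K = {x \<in> {0..<L}. cv vs x \<in> U \<inter> classB V E vs n 65}"
  have "card K = card (U \<inter> classB V E vs n 65)" unfolding K_def by (rule card_usable_indices)
  then have K_big: "real n \<le> 24 * real (card K)" using U B \<open>real n / 4 + 18 \<le> _\<close> by linarith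
  then have "2 \<le> card K" using n' by linarith
  have "real (card K) * 56 \<le> 2 * real (length vs)"
  proof (rule card_mult_le_double_length)
    fix x y assume "x \<in> K" "y \<in> K" "x \<noteq> y"
    then have "2 * ((real n + 65) / 2 - 3) - real (length vs) - 4 \<le> real (card (bridges vs es x y))"
      by (intro card_bridges_ge_min_degC) (auto simp: K_def classB_def)
    then show "56 \<le> real (card (bridges vs es x y))" using n' by (simp add: field_simps)
  qed (use \<open>2 \<le> card K\<close> in \<open>auto simp: K_def\<close>)
  then show False using K_big n' by linarith
qed

lemma card_usable_classB'_le_3:
  assumes n: "length vs + 1 \<le> n"
  shows "card (U \<inter> classB' V E vs n 13) \<le> 3"
proof (rule ccontr)
  assume not_le: "\<not> ?thesis"
  have n': "real (length vs) + 1 \<le> real n" using n by simp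
  define K where "K = {x \<in> {0..<L}. cv vs x \<in> U \<inter> classB' V E vs n 13}"
  have "card K = card (U \<inter> classB' V E vs n 13)" unfolding K_def by (rule card_usable_indices)
  then have "4 \<le> card K" using not_le by simp
  have "real (card K) * (real n / 2 + 23) \<le> 2 * real (length vs)"
  proof (rule card_mult_le_double_length)
    fix x y assume "x \<in> K" "y \<in> K" "x \<noteq> y"
    then have "2 * (3 * real n / 4 + 13) - real (length vs) - 4 \<le> real (card (bridges vs es x y))"
      by (intro card_bridges_ge_min_degC) (auto simp: K_def classB'_def)
    then show "real n / 2 + 23 \<le> real (card (bridges vs es x y))"
      using n' by (simp add: field_simps)
  qed (use \<open>4 \<le> card K\<close> in \<open>auto simp: K_def\<close>)
  moreover have "4 * (real n / 2 + 23) \<le> real (card K) * (real n / 2 + 23)"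
    using \<open>4 \<le> card K\<close> by (intro mult_right_mono) auto
  ultimately have "4 * (real n / 2 + 23) \<le> 2 * real (length vs)" by linarith
  then show False using n' by (simp add: field_simps)
qed

end

theorem lemma2p6:
  fixes V :: "'a set" and E :: "'a set set" and n :: nat
    and vs :: "'a list" and es :: "'a set list"
    and d0 \<gamma>1 \<gamma>2 :: real
  assumes d0: "d0 = 65" and g1: "\<gamma>1 = 18" and g2: "\<gamma>2 = 13"
    and n: "real n \<ge> d0 + 4"
    and H: "three_graph V E" and cardV: "card V = n"
    and ore: "\<And>u v. u \<in> V \<Longrightarrow> v \<in> V \<Longrightarrow> u \<noteq> v \<Longrightarrow> \<not> adjacent E u v \<Longrightarrow>
               real (deg V E u + deg V E v) \<ge> real n + d0"
    and C: "maximal_berge_cycle E vs es"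
    and len: "length vs \<in> {n - 1, n - 2, n - 3}"
  shows "\<forall>u \<in> V - set vs. \<forall>U. usable E vs es u U \<and> real (card U) \<ge> real (degC V E vs u) / 6 \<longrightarrow>
           card (U \<inter> classS V E vs n d0) \<le> 3 \<and>
           card (U \<inter> classB V E vs n d0) + 3 \<ge> card U \<and>
           (\<forall>i\<in>{0..<int (length vs)}. \<forall>j\<in>{0..<int (length vs)}.
              i \<noteq> j \<and> cv vs i \<in> U \<and> cv vs j \<in> U \<longrightarrow>
              int (card (bridges vs es i j)) \<ge>
                int (degC V E vs (cv vs i)) + int (degC V E vs (cv vs j)) - int (length vs) - 4) \<and>
           u \<in> classS' V E vs n \<gamma>1 \<and>
           card (U \<inter> classB' V E vs n \<gamma>2) \<le> 3"
proof (intro ballI allI impI)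
  fix u U
  assume u: "u \<in> V - set vs" and U: "usable E vs es u U \<and> real (degC V E vs u) / 6 \<le> real (card U)"
  interpret usable_set V E vs es u U using H C u U by unfold_locales auto
  have n69: "69 \<le> n" and len_n: "length vs + 1 \<le> n" "n \<le> length vs + 3" using n len d0 by auto
  have S: "card (U \<inter> classS V E vs n d0) \<le> 3" using card_usable_classS_le_3[OF ore cardV len_n(2)] .
  have B: "card U \<le> card (U \<inter> classB V E vs n d0) + 3"
    using card_usable_le_card_classB_add_3[OF S] .
  have "u \<in> classS' V E vs n 18" using outside_in_classS'[OF n69 len_n(1)] u U B d0 by simp
  then show "card (U \<inter> classS V E vs n d0) \<le> 3 \<and> card (U \<inter> classB V E vs n d0) + 3 \<ge> card U \<and>
      (\<forall>i\<in>{0..<int (length vs)}. \<forall>j\<in>{0..<int (length vs)}. i \<noteq> j \<and> cv vs i \<in> U \<and> cv vs j \<in> U \<longrightarrow>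
        int (card (bridges vs es i j)) \<ge>
          int (degC V E vs (cv vs i)) + int (degC V E vs (cv vs j)) - int (length vs) - 4) \<and>
      u \<in> classS' V E vs n \<gamma>1 \<and> card (U \<inter> classB' V E vs n \<gamma>2) \<le> 3"
    using S B card_bridges_ge card_usable_classB'_le_3[OF len_n(1)] g1 g2 by auto
qed

end
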